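(* Let $p>3$ be a prime number and $k$ an integer with $1\leq k\leq\frac{p-1}{2}$, and let $\zeta_p=e^{2\pi i/p}$. Then $\mathbb{Q}\!\left(\zeta_p,\sqrt[p]{\zeta_p^k+\zeta_p^{-k}}\right)/\mathbb{Q}(\zeta_p)$ is a cyclic field extension of degree $p$.
   Context: $\sqrt[p]{\zeta_p^k+\zeta_p^{-k}}$ denotes any $p$-th root of the real number $\zeta_p^k+\zeta_p^{-k}$; the field generated over $\mathbb{Q}(\zeta_p)$ does not depend on the choice. A cyclic extension is a Galois extension with cyclic Galois group. *)

theory Defs
  imports Complex_Main "HOL-Computational_Algebra.Primes"
begin

definition is_subfield :: "complex set \<Rightarrow> bool" where
  "is_subfield F \<longleftrightarrow> 0 \<in> F \<and> 1 \<in> F \<and>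
     (\<forall>x\<in>F. \<forall>y\<in>F. x + y \<in> F \<and> x * y \<in> F) \<and>
     (\<forall>x\<in>F. - x \<in> F) \<and> (\<forall>x\<in>F. x \<noteq> 0 \<longrightarrow> inverse x \<in> F)"

definition gen_field :: "complex set \<Rightarrow> complex set" where
  "gen_field S = \<Inter> {F. is_subfield F \<and> S \<subseteq> F}"

definition lin_indep_over :: "complex set \<Rightarrow> complex set \<Rightarrow> bool" where
  "lin_indep_over K B \<longleftrightarrow> (\<forall>c. (\<forall>b\<in>B. c b \<in> K) \<and> (\<Sum>b\<in>B. c b * b) = 0 \<longrightarrow> (\<forall>b\<in>B. c b = 0))"

definition span_over :: "complex set \<Rightarrow> complex set \<Rightarrow> complex set" where
  "span_over K B = {x. \<exists>c. (\<forall>b\<in>B. c b \<in> K) \<and> x = (\<Sum>b\<in>B. c b * b)}"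

definition basis_over :: "complex set \<Rightarrow> complex set \<Rightarrow> complex set \<Rightarrow> bool" where
  "basis_over K L B \<longleftrightarrow> finite B \<and> B \<subseteq> L \<and> lin_indep_over K B \<and> span_over K B = L"

definition ext_degree :: "complex set \<Rightarrow> complex set \<Rightarrow> nat \<Rightarrow> bool" where
  "ext_degree K L n \<longleftrightarrow> is_subfield K \<and> is_subfield L \<and> K \<subseteq> L \<and>
     (\<exists>B. basis_over K L B \<and> card B = n)"

definition auts :: "complex set \<Rightarrow> complex set \<Rightarrow> (complex \<Rightarrow> complex) set" where
  "auts K L = {\<sigma>. bij_betw \<sigma> L L \<and>
     (\<forall>x\<in>L. \<forall>y\<in>L. \<sigma> (x + y) = \<sigma> x + \<sigma> y \<and> \<sigma> (x * y) = \<sigma> x * \<sigma> y) \<and>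
     (\<forall>x\<in>K. \<sigma> x = x) \<and> (\<forall>x. x \<notin> L \<longrightarrow> \<sigma> x = x)}"

definition galois_ext :: "complex set \<Rightarrow> complex set \<Rightarrow> bool" where
  "galois_ext K L \<longleftrightarrow> (\<exists>n. ext_degree K L n \<and> finite (auts K L) \<and> card (auts K L) = n)"

definition cyclic_ext :: "complex set \<Rightarrow> complex set \<Rightarrow> bool" where
  "cyclic_ext K L \<longleftrightarrow> galois_ext K L \<and>
     (\<exists>\<sigma>\<in>auts K L. \<forall>\<tau>\<in>auts K L. \<exists>m::nat. \<tau> = \<sigma> ^^ m)"

end

(* Write \<zeta> = e^(2 pi i/p), \<lambda> = 1 - \<zeta> and a = \<zeta>^k + \<zeta>^-k.  By Eisenstein's criterion,
   1 + X + ... + X^(p-1) is the minimal polynomial of \<zeta>; hence \<lambda> is a prime of \<int>[\<zeta>], with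
   \<lambda> | f(\<zeta>) iff p | f(1), and \<lambda>^(p-1) and p divide each other.  Now a = 2 + \<lambda>^2 \<mu> where
   \<mu> is congruent to k^2 modulo \<lambda>, hence prime to \<lambda>.  If a were a p-th power in \<rat>(\<zeta>),
   clearing denominators would give g^p = d^p a in \<int>[\<zeta>] with \<lambda> not dividing d.  Since
   x congruent to an integer m modulo \<lambda> implies x^p congruent to m^p modulo \<lambda>^3 when p > 3,
   reducing modulo \<lambda>^3 forces \<lambda> | d, a contradiction.  So X^p - a has no root in K = \<rat>(\<zeta>),
   and Kummer theory over K, which contains the p-th roots of unity, applies: X^p - a is
   irreducible over K, K(\<alpha>) = K[\<alpha>] has basis 1, \<alpha>, ..., \<alpha>^(p-1), and the automorphisms of
   K(\<alpha>)/K are \<alpha> \<mapsto> \<zeta>^j \<alpha>, a cyclic group of order p. *)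

theory Submission
  imports Defs "Berlekamp_Zassenhaus.Factor_Bound"
begin

section \<open>Eisenstein's criterion and the polynomial 1 + X + ... + X^(n-1)\<close>

lemma eisenstein_unbalanced_factor:
  fixes g h :: "int poly" and q :: int
  assumes q: "prime q" and f: "f = g * h" and lead: "\<not> q dvd lead_coeff f"
    and low: "\<forall>i<degree f. q dvd coeff f i"
    and g0: "q dvd coeff g 0" and h0: "\<not> q dvd coeff h 0" and dh: "degree h > 0"
  shows False
proof -
  have "g \<noteq> 0" "h \<noteq> 0" using lead f by auto
  hence df: "degree f = degree g + degree h" using f by (simp add: degree_mult_eq)
  have "lead_coeff f = lead_coeff g * lead_coeff h" using f by (simp add: lead_coeff_mult)
  hence ex: "\<not> q dvd coeff g (degree g)" using lead by auto
  define i where "i = (LEAST i. \<not> q dvd coeff g i)"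
  have i1: "\<not> q dvd coeff g i" unfolding i_def by (rule LeastI, rule ex)
  have i2: "i \<le> degree g" unfolding i_def by (rule Least_le, rule ex)
  have i3: "\<And>j. j < i \<Longrightarrow> q dvd coeff g j" unfolding i_def using not_less_Least by blast
  have "i < degree f" using i2 df dh by simp
  hence "q dvd coeff f i" using low by auto
  also have "coeff f i = (\<Sum>j<i. coeff g j * coeff h (i - j)) + coeff g i * coeff h 0"
    using f by (simp add: coeff_mult lessThan_Suc_atMost[symmetric])
  finally have "q dvd coeff g i * coeff h 0"
    using dvd_sum[of "{..<i}" q] i3 by (simp add: dvd_add_right_iff)
  thus False using q i1 h0 by (simp add: prime_dvd_mult_iff)
qed

lemma eisenstein_criterion:
  fixes g h :: "int poly" and q :: int
  assumes q: "prime q" and f: "f = g * h" and lead: "\<not> q dvd lead_coeff f"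
    and low: "\<forall>i<degree f. q dvd coeff f i"
    and c0: "\<not> q^2 dvd coeff f 0"
  shows "degree g = 0 \<or> degree h = 0"
proof (rule ccontr)
  assume dd: "\<not> (degree g = 0 \<or> degree h = 0)"
  have "g \<noteq> 0" "h \<noteq> 0" using lead f by auto
  hence "0 < degree f" using f dd by (simp add: degree_mult_eq)
  hence "q dvd coeff f 0" using low by auto
  moreover have cf: "coeff f 0 = coeff g 0 * coeff h 0" using f by (simp add: coeff_mult)
  ultimately have "q dvd coeff g 0 \<or> q dvd coeff h 0" using q by (simp add: prime_dvd_mult_iff)
  moreover have "\<not> (q dvd coeff g 0 \<and> q dvd coeff h 0)"
    using c0 cf mult_dvd_mono[of q _ q] by (auto simp: power2_eq_square)
  moreover have "f = h * g" using f by (simp add: mult.commute)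
  ultimately show False
    using eisenstein_unbalanced_factor[OF q _ lead low] f dd by blast
qed

text \<open>For prime \<open>p\<close>, \<open>geom_poly p\<close> is the \<open>p\<close>-th cyclotomic polynomial.\<close>

definition geom_poly :: "nat \<Rightarrow> int poly" where "geom_poly n = (\<Sum>i<n. monom 1 i)"

lemma coeff_geom_poly: "coeff (geom_poly n) j = (if j < n then 1 else 0)"
  unfolding geom_poly_def coeff_sum by (simp add: coeff_monom)

lemma degree_geom_poly: assumes "n \<ge> 1" shows "degree (geom_poly n) = n - 1"
proof (rule antisym)
  show "degree (geom_poly n) \<le> n - 1" by (rule degree_le) (auto simp: coeff_geom_poly)
  show "n - 1 \<le> degree (geom_poly n)" by (rule le_degree) (use assms in \<open>simp add: coeff_geom_poly\<close>)
qed

lemma lead_coeff_geom_poly: assumes "n \<ge> 1" shows "lead_coeff (geom_poly n) = 1"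
  using assms by (simp add: degree_geom_poly coeff_geom_poly)

lemma poly_geom_poly_1: "poly (geom_poly n) 1 = int n"
  unfolding geom_poly_def by (simp add: poly_sum poly_monom)

lemma coeff_X_plus_1_power: "coeff ([:1, 1:] ^ i) j = of_nat (i choose j)"
proof (cases "j \<le> i")
  case True thus ?thesis using coeff_linear_poly_power[OF True, of 1 1] by simp
next
  case False
  have "degree ([:1::'a, 1:] ^ i) \<le> i" by (metis degree_linear_power order_refl)
  thus ?thesis using False by (simp add: coeff_eq_0 binomial_eq_0)
qed

lemma coeff_geom_poly_shift: "coeff (geom_poly n \<circ>\<^sub>p [:1, 1:]) j = int (n choose Suc j)"
proof -
  have "geom_poly n \<circ>\<^sub>p [:1, 1:] = (\<Sum>i<n. [:1, 1:] ^ i)"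
    unfolding geom_poly_def pcompose_hom.hom_sum
    by (intro sum.cong refl) (simp add: monom_altdef pcompose_hom.hom_power pcompose_pCons)
  hence "coeff (geom_poly n \<circ>\<^sub>p [:1, 1:]) j = int (\<Sum>i<n. i choose j)"
    by (simp add: coeff_sum coeff_X_plus_1_power[where 'a=int, of _ j, simplified])
  also have "(\<Sum>i<n. i choose j) = n choose Suc j"
    by (cases n) (simp_all add: lessThan_Suc_atMost sum_choose_upper)
  finally show ?thesis .
qed

lemma geom_poly_prime_irreducible:
  assumes p: "prime p" and f: "geom_poly p = g * h"
  shows "degree g = 0 \<or> degree h = 0"
proof -
  have p1: "p \<ge> 2" using p prime_ge_2_nat by blast
  have pi: "prime (int p)" using p by simp
  define F where "F = geom_poly p \<circ>\<^sub>p [:1, 1:]"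
  have F: "F = (g \<circ>\<^sub>p [:1, 1:]) * (h \<circ>\<^sub>p [:1, 1:])"
    unfolding F_def f by (simp add: pcompose_mult)
  have dF: "degree F = p - 1" unfolding F_def using p1 by (simp add: degree_pcompose degree_geom_poly)
  have "degree (g \<circ>\<^sub>p [:1, 1:]) = 0 \<or> degree (h \<circ>\<^sub>p [:1, 1:]) = 0"
  proof (rule eisenstein_criterion[OF pi F])
    have "lead_coeff F = int (p choose p)" unfolding dF unfolding F_def coeff_geom_poly_shift
      using p1 by simp
    hence "lead_coeff F = 1" by simp
    thus "\<not> int p dvd lead_coeff F" using pi by (simp add: prime_int_iff)
    show "\<forall>i<degree F. int p dvd coeff F i"
    proof (intro allI impI)
      fix i assume "i < degree F"
      hence "p dvd p choose Suc i" using p dF by (intro dvd_choose_prime) auto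
      thus "int p dvd coeff F i" unfolding F_def coeff_geom_poly_shift by (simp add: int_dvd_int_iff)
    qed
    have "coeff F 0 = int p" unfolding F_def by (simp only: coeff_geom_poly_shift) simp
    thus "\<not> (int p)^2 dvd coeff F 0"
      using pi p1 by (auto simp: power2_eq_square prime_int_iff)
  qed
  thus ?thesis by (simp add: degree_pcompose)
qed

section \<open>Subrings, subfields and polynomials over them\<close>

locale subring_set =
  fixes S :: "'a::comm_ring_1 set"
  assumes zero_mem: "0 \<in> S" and one_mem: "1 \<in> S"
    and add_mem: "x \<in> S \<Longrightarrow> y \<in> S \<Longrightarrow> x + y \<in> S"
    and mult_mem: "x \<in> S \<Longrightarrow> y \<in> S \<Longrightarrow> x * y \<in> S"
    and uminus_mem: "x \<in> S \<Longrightarrow> - x \<in> S"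

lemma subring_set_UNIV: "subring_set UNIV"
  by unfold_locales auto

lemma subfield_imp_subring_set: "is_subfield F \<Longrightarrow> subring_set F"
  unfolding is_subfield_def by unfold_locales auto

lemma subfield_inverse_mem: "is_subfield F \<Longrightarrow> x \<in> F \<Longrightarrow> inverse x \<in> F"
  unfolding is_subfield_def by (cases "x = 0") auto

lemma subfield_divide_mem: "is_subfield F \<Longrightarrow> x \<in> F \<Longrightarrow> y \<in> F \<Longrightarrow> x / y \<in> F"
  unfolding divide_inverse is_subfield_def using subfield_inverse_mem[of F y] by auto

lemma gen_field_is_subfield: "is_subfield (gen_field S)"
  unfolding gen_field_def is_subfield_def by auto

lemma gen_field_superset: "S \<subseteq> gen_field S"
  unfolding gen_field_def by auto

lemma gen_field_least: "is_subfield F \<Longrightarrow> S \<subseteq> F \<Longrightarrow> gen_field S \<subseteq> F"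
  unfolding gen_field_def by auto

definition poly_over :: "'a::comm_ring_1 set \<Rightarrow> 'a poly \<Rightarrow> bool" where
  "poly_over S f \<longleftrightarrow> (\<forall>i. coeff f i \<in> S)"

lemma poly_over_UNIV: "poly_over UNIV f"
  unfolding poly_over_def by auto

context subring_set
begin

lemma diff_mem: "x \<in> S \<Longrightarrow> y \<in> S \<Longrightarrow> x - y \<in> S"
  by (metis add_mem uminus_mem diff_conv_add_uminus)

lemma sum_mem: "(\<And>x. x \<in> A \<Longrightarrow> f x \<in> S) \<Longrightarrow> sum f A \<in> S"
  by (induction A rule: infinite_finite_induct) (auto intro: zero_mem add_mem)

lemma power_mem: "x \<in> S \<Longrightarrow> x ^ n \<in> S"
  by (induction n) (auto intro: one_mem mult_mem)

lemma of_nat_mem: "of_nat n \<in> S"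
  by (induction n) (auto intro: zero_mem one_mem add_mem)

lemma poly_over_add: "poly_over S f \<Longrightarrow> poly_over S g \<Longrightarrow> poly_over S (f + g)"
  and poly_over_diff: "poly_over S f \<Longrightarrow> poly_over S g \<Longrightarrow> poly_over S (f - g)"
  and poly_over_uminus: "poly_over S f \<Longrightarrow> poly_over S (- f)"
  unfolding poly_over_def by (auto intro: add_mem diff_mem uminus_mem)

lemma poly_over_mult: "poly_over S f \<Longrightarrow> poly_over S g \<Longrightarrow> poly_over S (f * g)"
  unfolding poly_over_def coeff_mult by (auto intro!: sum_mem mult_mem)

lemma poly_over_monom: "c \<in> S \<Longrightarrow> poly_over S (monom c n)"
  unfolding poly_over_def by (auto simp: coeff_monom intro: zero_mem)

lemma poly_over_const: "c \<in> S \<Longrightarrow> poly_over S [:c:]"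
  unfolding poly_over_def by (auto simp: coeff_pCons split: nat.splits intro: zero_mem)

lemma poly_over_0: "poly_over S 0" and poly_over_1: "poly_over S 1"
  unfolding poly_over_def by (auto simp: coeff_1 intro: zero_mem one_mem)

lemma poly_over_pCons: "c \<in> S \<Longrightarrow> poly_over S f \<Longrightarrow> poly_over S (pCons c f)"
  unfolding poly_over_def by (auto simp: coeff_pCons split: nat.splits)

lemma poly_over_smult: "c \<in> S \<Longrightarrow> poly_over S f \<Longrightarrow> poly_over S (smult c f)"
  unfolding poly_over_def by (auto intro: mult_mem)

lemma poly_over_sum: "(\<And>x. x \<in> A \<Longrightarrow> poly_over S (f x)) \<Longrightarrow> poly_over S (sum f A)"
  by (induction A rule: infinite_finite_induct) (auto intro: poly_over_0 poly_over_add)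

lemma poly_over_prod: "(\<And>x. x \<in> A \<Longrightarrow> poly_over S (f x)) \<Longrightarrow> poly_over S (prod f A)"
  by (induction A rule: infinite_finite_induct) (auto intro: poly_over_1 poly_over_mult)

lemma poly_over_monic_divmod:
  assumes m: "lead_coeff m = 1" "poly_over S m" and f: "poly_over S f"
  shows "\<exists>q r. poly_over S q \<and> poly_over S r \<and> f = m * q + r \<and> (r = 0 \<or> degree r < degree m)"
  using f
proof (induction "degree f" arbitrary: f rule: less_induct)
  case less
  show ?case
  proof (cases "f = 0 \<or> degree f < degree m")
    case True
    thus ?thesis using less.prems by (intro exI[of _ 0] exI[of _ f]) (auto intro: poly_over_0)
  next
    case False
    hence dle: "degree m \<le> degree f" by auto
    define c where "c = lead_coeff f"
    define t where "t = monom c (degree f - degree m)"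
    define f' where "f' = f - t * m"
    have "c \<in> S" using less.prems unfolding c_def poly_over_def by auto
    hence tS: "poly_over S t" unfolding t_def by (rule poly_over_monom)
    have f'S: "poly_over S f'" unfolding f'_def by (intro poly_over_diff poly_over_mult less.prems m tS)
    have "coeff (t * m) (degree f) = c" using dle m(1) by (simp add: t_def coeff_monom_mult)
    hence "coeff f' (degree f) = 0" unfolding f'_def by (simp add: c_def)
    moreover have "degree (t * m) \<le> degree f"
      using degree_mult_le[of t m] degree_monom_le[of c "degree f - degree m"] dle
      unfolding t_def by linarith
    hence "degree f' \<le> degree f" unfolding f'_def using degree_diff_le by blast
    ultimately have "f' = 0 \<or> degree f' < degree f"
      by (metis le_neq_implies_less leading_coeff_0_iff)
    then obtain q r where qr: "poly_over S q" "poly_over S r" "f' = m * q + r"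
        "r = 0 \<or> degree r < degree m"
      using less.hyps[OF _ f'S] poly_over_0 by (metis add_0 mult_zero_right)
    have "f = m * (q + t) + r" using qr(3) unfolding f'_def by (simp add: algebra_simps)
    thus ?thesis using qr poly_over_add[OF qr(1) tS] by blast
  qed
qed

end

section \<open>The ring \<open>\<int>[\<zeta>]\<close> and its prime \<open>1 - \<zeta>\<close>\<close>

interpretation of_rat_poly_hom: map_poly_comm_ring_hom "of_rat :: rat \<Rightarrow> 'a::field_char_0" ..

locale prime_root_of_unity =
  fixes p :: nat and \<zeta> :: complex
  assumes prime_p: "prime p" and zeta_eq: "\<zeta> = cis (2 * pi / real p)"
begin

lemma p_ge_2: "p \<ge> 2" and p_ge_1: "p \<ge> 1" and p_pos: "p > 0"
  using prime_ge_2_nat[OF prime_p] by auto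

lemma zeta_power: "\<zeta> ^ j = cis (2 * pi * real j / real p)"
  unfolding zeta_eq DeMoivre by (simp add: mult_ac)

lemma zeta_power_p: "\<zeta> ^ p = 1"
  unfolding zeta_power using p_pos by simp

lemma zeta_nonzero: "\<zeta> \<noteq> 0"
  unfolding zeta_eq by simp

lemma zeta_power_inj: "i < p \<Longrightarrow> j < p \<Longrightarrow> \<zeta> ^ i = \<zeta> ^ j \<Longrightarrow> i = j"
  using bij_betw_roots_unity[OF p_pos] unfolding bij_betw_def inj_on_def zeta_power by auto

lemma zeta_power_eq_1_iff: "\<zeta> ^ j = 1 \<longleftrightarrow> p dvd j"
proof -
  have "\<zeta> ^ j = \<zeta> ^ (p * (j div p) + j mod p)" by simp
  also have "\<dots> = \<zeta> ^ (j mod p)" by (simp only: power_add power_mult zeta_power_p) simp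
  finally have "\<zeta> ^ j = 1 \<longleftrightarrow> \<zeta> ^ (j mod p) = \<zeta> ^ 0" by simp
  also have "\<dots> \<longleftrightarrow> j mod p = 0" using zeta_power_inj[of "j mod p" 0] p_pos by auto
  finally show ?thesis by auto
qed

lemma zeta_neq_1: "\<zeta> \<noteq> 1"
  using zeta_power_eq_1_iff[of 1] p_ge_2 by auto

lemma root_of_unity_is_zeta_power: assumes "w ^ p = 1" shows "\<exists>j<p. w = \<zeta> ^ j"
proof -
  obtain j where "j < p" "w = cis (2 * pi * real j / real p)"
    using assms bij_betw_roots_unity[OF p_pos] unfolding bij_betw_def by auto
  thus ?thesis unfolding zeta_power[symmetric] by auto
qed

lemma sum_zeta_powers: "(\<Sum>i<p. \<zeta> ^ i) = 0"
  using zeta_neq_1 by (simp add: geometric_sum zeta_power_p)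

definition eval_zeta :: "int poly \<Rightarrow> complex" where
  "eval_zeta f = poly (of_int_poly f) \<zeta>"

lemma eval_zeta_add[simp]: "eval_zeta (f + g) = eval_zeta f + eval_zeta g"
  and eval_zeta_mult[simp]: "eval_zeta (f * g) = eval_zeta f * eval_zeta g"
  and eval_zeta_diff[simp]: "eval_zeta (f - g) = eval_zeta f - eval_zeta g"
  and eval_zeta_uminus[simp]: "eval_zeta (- f) = - eval_zeta f"
  and eval_zeta_const[simp]: "eval_zeta [:c:] = of_int c"
  and eval_zeta_0[simp]: "eval_zeta 0 = 0"
  and eval_zeta_1[simp]: "eval_zeta 1 = 1"
  and eval_zeta_X[simp]: "eval_zeta [:0, 1:] = \<zeta>"
  and eval_zeta_power[simp]: "eval_zeta (f ^ n) = eval_zeta f ^ n"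
  and eval_zeta_smult[simp]: "eval_zeta (smult c f) = of_int c * eval_zeta f"
  and eval_zeta_monom[simp]: "eval_zeta (monom c n) = of_int c * \<zeta> ^ n"
  and eval_zeta_pCons[simp]: "eval_zeta (pCons c f) = of_int c + \<zeta> * eval_zeta f"
  by (simp_all add: eval_zeta_def hom_distribs poly_monom of_int_hom.map_poly_pCons_hom)

lemma eval_zeta_sum: "eval_zeta (sum f A) = (\<Sum>x\<in>A. eval_zeta (f x))"
  by (simp add: eval_zeta_def hom_distribs poly_sum)

lemma eval_zeta_pcompose: "eval_zeta (f \<circ>\<^sub>p g) = poly (of_int_poly f) (eval_zeta g)"
  unfolding eval_zeta_def by (simp add: hom_distribs poly_pcompose)

lemma eval_zeta_geom_poly: "eval_zeta (geom_poly p) = 0"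
  unfolding geom_poly_def eval_zeta_sum using sum_zeta_powers by simp

text \<open>The minimal polynomial argument: a rational polynomial of least degree vanishing at \<open>\<zeta>\<close>
  divides \<open>geom_poly p\<close>, which is irreducible by Gauss's lemma and Eisenstein.\<close>

lemma rat_poly_zeta_root_degree:
  fixes r :: "rat poly"
  assumes "r \<noteq> 0" and "poly (map_poly of_rat r) \<zeta> = 0"
  shows "degree r \<ge> p - 1"
proof -
  define vanishes where "vanishes f \<longleftrightarrow> f \<noteq> 0 \<and> poly (map_poly of_rat f) \<zeta> = 0" for f :: "rat poly"
  define n where "n = (LEAST n. \<exists>f. vanishes f \<and> degree f = n)"
  obtain m where m: "vanishes m" "degree m = n"
    using LeastI_ex[of "\<lambda>n. \<exists>f. vanishes f \<and> degree f = n"] assms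
    unfolding n_def vanishes_def by blast
  have mmin: "degree m \<le> degree f" if "vanishes f" for f
    unfolding m(2) n_def by (rule Least_le) (use that in blast)
  define Q where "Q = (of_int_poly (geom_poly p) :: rat poly)"
  have "poly (map_poly of_rat Q) \<zeta> = 0"
    using eval_zeta_geom_poly unfolding Q_def eval_zeta_def by (simp add: map_poly_map_poly o_def)
  have Q_mod: "Q mod m = Q - (Q div m) * m" by (rule minus_div_mult_eq_mod[symmetric])
  have "poly (map_poly of_rat (Q mod m)) \<zeta> = poly (map_poly of_rat Q) \<zeta>
      - poly (map_poly of_rat (Q div m)) \<zeta> * poly (map_poly of_rat m) \<zeta>"
    unfolding Q_mod of_rat_poly_hom.hom_minus of_rat_poly_hom.hom_mult poly_diff poly_mult ..
  also have "\<dots> = 0" using m(1) \<open>poly (map_poly of_rat Q) \<zeta> = 0\<close> unfolding vanishes_def by simp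
  finally have "poly (map_poly of_rat (Q mod m)) \<zeta> = 0" .
  hence "Q mod m = 0"
    using degree_mod_less[of m Q] mmin[of "Q mod m"] m(1) unfolding vanishes_def by fastforce
  hence Q_factor: "Q = (Q div m) * m" using div_mult_mod_eq[of Q m] by simp
  obtain g h where gh: "geom_poly p = g * h" "degree g = degree (Q div m)" "degree h = degree m"
    using rat_to_int_factor[OF Q_factor[unfolded Q_def]] unfolding Q_def by blast
  have "degree m \<noteq> 0"
  proof
    assume "degree m = 0"
    then obtain c where "m = [:c:]" by (metis degree_eq_zeroE)
    thus False using m(1) unfolding vanishes_def by (cases "c = 0") (auto simp: map_poly_pCons)
  qed
  hence "degree (Q div m) = 0" using geom_poly_prime_irreducible[OF prime_p gh(1)] gh(2,3) by auto
  moreover have "Q \<noteq> 0" unfolding Q_def using lead_coeff_geom_poly[OF p_ge_1] by auto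
  hence "degree Q = degree (Q div m) + degree m"
    using Q_factor m(1) unfolding vanishes_def by (metis degree_mult_eq mult_zero_left)
  ultimately have "degree Q = degree m" by simp
  moreover have "degree Q = p - 1"
    unfolding Q_def of_int_hom.degree_map_poly_hom by (rule degree_geom_poly[OF p_ge_1])
  moreover have "degree m \<le> degree r" using mmin assms unfolding vanishes_def by blast
  ultimately show ?thesis by simp
qed

lemma int_poly_zeta_root_degree:
  fixes r :: "int poly"
  assumes "r \<noteq> 0" and "eval_zeta r = 0"
  shows "degree r \<ge> p - 1"
  using rat_poly_zeta_root_degree[of "of_int_poly r"] assms
  by (simp add: eval_zeta_def map_poly_map_poly o_def)

lemma geom_poly_divmod:
  obtains q r where "f = geom_poly p * q + r" "r = 0 \<or> degree r < p - 1"
  using subring_set.poly_over_monic_divmod[OF subring_set_UNIV lead_coeff_geom_poly[OF p_ge_1]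
      poly_over_UNIV poly_over_UNIV] degree_geom_poly[OF p_ge_1] by metis

lemma geom_poly_dvd_if_eval_zeta_0: assumes "eval_zeta f = 0" shows "geom_poly p dvd f"
proof -
  obtain q r where qr: "f = geom_poly p * q + r" "r = 0 \<or> degree r < p - 1"
    by (rule geom_poly_divmod)
  have "eval_zeta r = 0" using assms qr(1) eval_zeta_geom_poly by simp
  hence "r = 0" using int_poly_zeta_root_degree[of r] qr(2) by fastforce
  thus ?thesis using qr(1) by simp
qed

lemma eval_zeta_reduce: "\<exists>g. eval_zeta g = eval_zeta f \<and> (g = 0 \<or> degree g < p - 1)"
proof -
  obtain q r where qr: "f = geom_poly p * q + r" "r = 0 \<or> degree r < p - 1"
    by (rule geom_poly_divmod)
  thus ?thesis using eval_zeta_geom_poly by auto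
qed

lemma eval_zeta_unique:
  assumes "eval_zeta f = eval_zeta g" "f = 0 \<or> degree f < p - 1" "g = 0 \<or> degree g < p - 1"
  shows "f = g"
proof (rule ccontr)
  assume "f \<noteq> g"
  moreover have "degree f \<le> p - 2" "degree g \<le> p - 2" using assms(2,3) p_ge_2 by auto
  hence "degree (f - g) < p - 1" using degree_diff_le[of f "p - 2" g] p_ge_2 by linarith
  ultimately show False using int_poly_zeta_root_degree[of "f - g"] assms(1) by simp
qed

end

context prime_root_of_unity
begin

definition Z_zeta :: "complex set" where "Z_zeta = range eval_zeta"

lemma eval_zeta_in_Z_zeta [simp, intro]: "eval_zeta f \<in> Z_zeta"
  unfolding Z_zeta_def by auto

lemma Z_zetaE: assumes "x \<in> Z_zeta" obtains f where "x = eval_zeta f"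
  using assms unfolding Z_zeta_def by auto

sublocale Z_zeta: subring_set Z_zeta
proof
  show "0 \<in> Z_zeta" "1 \<in> Z_zeta"
    using eval_zeta_in_Z_zeta[of 0] eval_zeta_in_Z_zeta[of 1] by simp_all
next
  fix x y assume "x \<in> Z_zeta" "y \<in> Z_zeta"
  then obtain f g where "x = eval_zeta f" "y = eval_zeta g" by (auto elim!: Z_zetaE)
  thus "x + y \<in> Z_zeta" "x * y \<in> Z_zeta"
    using eval_zeta_in_Z_zeta[of "f + g"] eval_zeta_in_Z_zeta[of "f * g"] by auto
next
  fix x assume "x \<in> Z_zeta"
  then obtain f where "x = eval_zeta f" by (auto elim!: Z_zetaE)
  thus "- x \<in> Z_zeta" using eval_zeta_in_Z_zeta[of "- f"] by auto
qed

lemma of_int_in_Z_zeta: "of_int c \<in> Z_zeta"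
  using eval_zeta_in_Z_zeta[of "[:c:]"] by simp

lemma zeta_in_Z_zeta: "\<zeta> \<in> Z_zeta"
  using eval_zeta_in_Z_zeta[of "[:0, 1:]"] by simp

definition lam :: complex where "lam = 1 - \<zeta>"

lemma lam_in_Z_zeta: "lam \<in> Z_zeta"
  unfolding lam_def by (intro Z_zeta.diff_mem Z_zeta.one_mem zeta_in_Z_zeta)

lemma lam_nonzero: "lam \<noteq> 0"
  unfolding lam_def using zeta_neq_1 by simp

definition zeta_dvd :: "complex \<Rightarrow> complex \<Rightarrow> bool" where
  "zeta_dvd a b \<longleftrightarrow> (\<exists>w\<in>Z_zeta. b = a * w)"

lemma zeta_dvd_0: "zeta_dvd a 0"
  unfolding zeta_dvd_def using Z_zeta.zero_mem by force

lemma one_zeta_dvd: "b \<in> Z_zeta \<Longrightarrow> zeta_dvd 1 b"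
  unfolding zeta_dvd_def by auto

lemma zeta_dvd_add: "zeta_dvd a b \<Longrightarrow> zeta_dvd a c \<Longrightarrow> zeta_dvd a (b + c)"
  unfolding zeta_dvd_def by (auto intro!: bexI[of _ "_ + _"] Z_zeta.add_mem simp: algebra_simps)

lemma zeta_dvd_diff: "zeta_dvd a b \<Longrightarrow> zeta_dvd a c \<Longrightarrow> zeta_dvd a (b - c)"
  unfolding zeta_dvd_def by (auto intro!: bexI[of _ "_ - _"] Z_zeta.diff_mem simp: algebra_simps)

lemma zeta_dvd_uminus: "zeta_dvd a b \<Longrightarrow> zeta_dvd a (- b)"
  unfolding zeta_dvd_def by (auto intro!: bexI[of _ "- _"] Z_zeta.uminus_mem)

lemma zeta_dvd_mult_right: "zeta_dvd a b \<Longrightarrow> c \<in> Z_zeta \<Longrightarrow> zeta_dvd a (b * c)"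
  unfolding zeta_dvd_def by (auto intro!: bexI[of _ "_ * _"] Z_zeta.mult_mem simp: algebra_simps)

lemma zeta_dvd_mult_left: "zeta_dvd a b \<Longrightarrow> c \<in> Z_zeta \<Longrightarrow> zeta_dvd a (c * b)"
  using zeta_dvd_mult_right[of a b c] by (simp add: mult.commute)

lemma zeta_dvd_trans: "zeta_dvd a b \<Longrightarrow> zeta_dvd b c \<Longrightarrow> zeta_dvd a c"
  unfolding zeta_dvd_def by (auto intro!: bexI[of _ "_ * _"] Z_zeta.mult_mem simp: algebra_simps)

lemma zeta_dvd_sum: "(\<And>i. i \<in> A \<Longrightarrow> zeta_dvd a (f i)) \<Longrightarrow> zeta_dvd a (sum f A)"
  by (induction A rule: infinite_finite_induct) (auto intro: zeta_dvd_0 zeta_dvd_add)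

lemma zeta_dvd_power_mono: "m \<le> n \<Longrightarrow> a \<in> Z_zeta \<Longrightarrow> zeta_dvd (a ^ m) (a ^ n)"
  unfolding zeta_dvd_def
  by (intro bexI[of _ "a ^ (n - m)"] Z_zeta.power_mem) (auto simp: power_add[symmetric])

lemma zeta_dvd_cancel: "a \<noteq> 0 \<Longrightarrow> zeta_dvd (a * b) (a * c) \<Longrightarrow> zeta_dvd b c"
  unfolding zeta_dvd_def by auto

lemma zeta_dvd_power: "zeta_dvd a b \<Longrightarrow> zeta_dvd (a ^ n) (b ^ n)"
  unfolding zeta_dvd_def
  by (auto intro!: bexI[of _ "_ ^ n"] Z_zeta.power_mem simp: power_mult_distrib)

lemma lam_dvd_eval_zeta_diff: "zeta_dvd lam (eval_zeta f - of_int (poly f 1))"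
proof -
  have "poly (f - [:poly f 1:]) 1 = 0" by simp
  then obtain h where h: "f - [:poly f 1:] = [:-1, 1:] * h"
    by (metis dvd_def dvd_iff_poly_eq_0 minus_minus)
  have "eval_zeta f - of_int (poly f 1) = eval_zeta (f - [:poly f 1:])" by simp
  also have "\<dots> = lam * (- eval_zeta h)" unfolding h lam_def by (simp add: algebra_simps)
  finally show ?thesis
    unfolding zeta_dvd_def by (intro bexI[of _ "- eval_zeta h"]) (auto intro: Z_zeta.uminus_mem)
qed

lemma geom_poly_shift_decomposition:
  "\<exists>G. geom_poly p \<circ>\<^sub>p [:1, 1:] = smult (int p) G + monom 1 (p - 1) \<and> coeff G 0 = 1"
proof -
  define G :: "int poly" where "G = (\<Sum>i<p - 1. monom (int (p choose Suc i) div int p) i)"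
  have coeff_G: "coeff G i = (if i < p - 1 then int (p choose Suc i) div int p else 0)" for i
    unfolding G_def coeff_sum by (simp add: coeff_monom)
  have "coeff (geom_poly p \<circ>\<^sub>p [:1, 1:]) i = coeff (smult (int p) G + monom 1 (p - 1)) i" for i
  proof (cases "i < p - 1")
    case True
    hence "p dvd p choose Suc i" using prime_p by (intro dvd_choose_prime) auto
    hence "int p dvd int (p choose Suc i)" by (simp add: int_dvd_int_iff)
    thus ?thesis using True by (simp add: coeff_geom_poly_shift[simplified] coeff_G coeff_monom)
  next
    case False
    hence "i = p - 1 \<or> p < Suc i" by auto
    thus ?thesis using False p_ge_2
      by (auto simp: coeff_geom_poly_shift[simplified] coeff_G coeff_monom binomial_eq_0)
  qed
  moreover have "coeff G 0 = 1" using p_ge_2 by (simp add: coeff_G)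
  ultimately show ?thesis by (blast intro: poly_eqI)
qed

text \<open>\<open>\<lambda>\<^sup>p\<^sup>-\<^sup>1\<close> and \<open>p\<close> are associates in \<open>\<int>[\<zeta>]\<close>.\<close>

lemma neg_lam_power_p_minus_1: "\<exists>B\<in>Z_zeta. (- lam) ^ (p - 1) = of_nat p * (lam * B - 1)"
proof -
  obtain G where G: "geom_poly p \<circ>\<^sub>p [:1, 1:] = smult (int p) G + monom 1 (p - 1)" "coeff G 0 = 1"
    using geom_poly_shift_decomposition by blast
  have "[:0, 1:] dvd (G - 1)" using G(2) by (subst dvd_iff_poly_eq_0) (simp_all add: poly_0_coeff_0)
  then obtain G' where G': "G = 1 + [:0, 1:] * G'" by (auto simp: dvd_def algebra_simps)
  have shift: "geom_poly p = (geom_poly p \<circ>\<^sub>p [:1, 1:]) \<circ>\<^sub>p [:-1, 1:]"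
  proof -
    have "[:1, 1:] \<circ>\<^sub>p [:-1, 1::int:] = [:0, 1:]"
      by (rule poly_eqI) (simp add: coeff_pCons split: nat.split)
    thus ?thesis by (simp only: pcompose_assoc[symmetric] pcompose_idR)
  qed
  have minus_lam: "eval_zeta [:-1, 1:] = - lam" unfolding lam_def by simp
  have "0 = eval_zeta (geom_poly p)" using eval_zeta_geom_poly by simp
  also have "\<dots> = poly (of_int_poly (smult (int p) G + monom 1 (p - 1))) (- lam)"
    by (subst shift) (simp only: eval_zeta_pcompose G(1) minus_lam)
  also have "\<dots> = of_nat p * poly (of_int_poly G) (- lam) + (- lam) ^ (p - 1)"
    by (simp add: hom_distribs poly_monom)
  also have "poly (of_int_poly G) (- lam) = 1 - lam * eval_zeta (G' \<circ>\<^sub>p [:-1, 1:])"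
    unfolding G' eval_zeta_pcompose minus_lam by (simp add: hom_distribs)
  finally have "(- lam) ^ (p - 1) = of_nat p * (lam * eval_zeta (G' \<circ>\<^sub>p [:-1, 1:]) - 1)"
    by (simp add: algebra_simps add_eq_0_iff2)
  thus ?thesis by blast
qed

lemma lam_power_dvd_p: "j \<le> p - 1 \<Longrightarrow> zeta_dvd (lam ^ j) (of_nat p)"
proof (induction j)
  case 0 thus ?case using one_zeta_dvd Z_zeta.of_nat_mem by simp
next
  case (Suc j)
  obtain B where B: "B \<in> Z_zeta" "(- lam) ^ (p - 1) = of_nat p * (lam * B - 1)"
    using neg_lam_power_p_minus_1 by blast
  have "of_nat p = lam * of_nat p * B - of_nat p * (lam * B - 1)" by (simp add: algebra_simps)
  also have "of_nat p * (lam * B - 1) = (- 1) ^ (p - 1) * lam ^ (p - 1)"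
    using B(2) power_minus[of lam "p - 1"] by simp
  finally have p_eq: "of_nat p = lam * of_nat p * B - (- 1) ^ (p - 1) * lam ^ (p - 1)" .
  obtain w where w: "w \<in> Z_zeta" "of_nat p = lam ^ j * w"
    using Suc unfolding zeta_dvd_def by auto
  have "zeta_dvd (lam ^ Suc j) (lam * of_nat p * B)"
    unfolding zeta_dvd_def w(2) using w(1) B(1)
    by (intro bexI[of _ "w * B"] Z_zeta.mult_mem) (auto simp: mult_ac)
  moreover have "zeta_dvd (lam ^ Suc j) ((- 1) ^ (p - 1) * lam ^ (p - 1))"
    using Suc.prems
    by (intro zeta_dvd_mult_left zeta_dvd_power_mono lam_in_Z_zeta Z_zeta.power_mem
        Z_zeta.uminus_mem Z_zeta.one_mem)
  ultimately have "zeta_dvd (lam ^ Suc j) (lam * of_nat p * B - (- 1) ^ (p - 1) * lam ^ (p - 1))"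
    by (rule zeta_dvd_diff)
  thus ?case by (simp only: p_eq[symmetric])
qed

lemma p_dvd_lam_power: "zeta_dvd (of_nat p) (lam ^ (p - 1))"
proof -
  obtain B where B: "B \<in> Z_zeta" "(- lam) ^ (p - 1) = of_nat p * (lam * B - 1)"
    using neg_lam_power_p_minus_1 by blast
  have "lam ^ (p - 1) = (- 1) ^ (p - 1) * (- lam) ^ (p - 1)"
    using power_minus[of "- lam" "p - 1"] by simp
  also have "\<dots> = of_nat p * ((- 1) ^ (p - 1) * (lam * B - 1))" unfolding B(2) by simp
  finally show ?thesis unfolding zeta_dvd_def
    by (auto intro!: Z_zeta.mult_mem Z_zeta.power_mem Z_zeta.uminus_mem Z_zeta.one_mem
        Z_zeta.diff_mem lam_in_Z_zeta B(1))
qed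

lemma lam_dvd_p: "zeta_dvd lam (of_nat p)"
  using lam_power_dvd_p[of 1] p_ge_2 by simp

lemma lam_dvd_eval_zeta_iff: "zeta_dvd lam (eval_zeta f) \<longleftrightarrow> int p dvd poly f 1"
proof
  assume "int p dvd poly f 1"
  then obtain c where c: "poly f 1 = int p * c" by (auto simp: dvd_def)
  have "zeta_dvd lam (of_int (poly f 1))"
    unfolding c using zeta_dvd_mult_right[OF lam_dvd_p of_int_in_Z_zeta[of c]] by simp
  from zeta_dvd_add[OF lam_dvd_eval_zeta_diff[of f] this] show "zeta_dvd lam (eval_zeta f)" by simp
next
  assume "zeta_dvd lam (eval_zeta f)"
  then obtain h where h: "eval_zeta f = lam * eval_zeta h"
    unfolding zeta_dvd_def by (auto elim: Z_zetaE)
  have "eval_zeta (f - [:1, -1:] * h) = 0" using h unfolding lam_def by (simp add: algebra_simps)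
  then obtain q where q: "f - [:1, -1:] * h = geom_poly p * q"
    using geom_poly_dvd_if_eval_zeta_0 by blast
  have "poly f 1 = poly (f - [:1, -1:] * h) 1" by simp
  also have "\<dots> = int p * poly q 1" unfolding q by (simp add: poly_geom_poly_1)
  finally show "int p dvd poly f 1" by simp
qed

lemma lam_dvd_of_int_iff: "zeta_dvd lam (of_int n) \<longleftrightarrow> int p dvd n"
  using lam_dvd_eval_zeta_iff[of "[:n:]"] by simp

lemma lam_dvd_mult:
  assumes "x \<in> Z_zeta" "y \<in> Z_zeta" "zeta_dvd lam (x * y)"
  shows "zeta_dvd lam x \<or> zeta_dvd lam y"
proof -
  obtain f g where fg: "x = eval_zeta f" "y = eval_zeta g" using assms by (auto elim!: Z_zetaE)
  have "int p dvd poly f 1 * poly g 1" using assms(3) lam_dvd_eval_zeta_iff[of "f * g"] fg by simp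
  hence "int p dvd poly f 1 \<or> int p dvd poly g 1" using prime_p by (simp add: prime_dvd_mult_iff)
  thus ?thesis using lam_dvd_eval_zeta_iff fg by auto
qed

lemma lam_dvd_power: "x \<in> Z_zeta \<Longrightarrow> zeta_dvd lam (x ^ n) \<Longrightarrow> zeta_dvd lam x"
proof (induction n)
  case 0
  hence "int p dvd 1" using lam_dvd_of_int_iff[of 1] by simp
  thus ?case using p_ge_2 by auto
next
  case (Suc n)
  thus ?case using lam_dvd_mult[OF Suc.prems(1) Z_zeta.power_mem[OF Suc.prems(1)]] by auto
qed

lemma lam_power_not_dvd:
  assumes x: "x \<in> Z_zeta" "x \<noteq> 0"
  shows "\<exists>N. \<not> zeta_dvd (lam ^ N) x"
proof (rule ccontr)
  assume "\<not> (\<exists>N. \<not> zeta_dvd (lam ^ N) x)"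
  hence "zeta_dvd (of_nat p ^ n) x" for n
    using zeta_dvd_trans[OF zeta_dvd_power[OF p_dvd_lam_power]] by (simp add: power_mult[symmetric])
  obtain f where f: "x = eval_zeta f" "f = 0 \<or> degree f < p - 1"
    using x(1) eval_zeta_reduce by (metis Z_zetaE)
  then obtain i where ci: "coeff f i \<noteq> 0" using x(2) by (metis eval_zeta_0 leading_coeff_0_iff)
  define n where "n = nat \<bar>coeff f i\<bar>"
  obtain w where w: "w \<in> Z_zeta" "x = of_nat p ^ n * w"
    using \<open>zeta_dvd (of_nat p ^ n) x\<close> unfolding zeta_dvd_def by auto
  obtain g where g: "w = eval_zeta g" "g = 0 \<or> degree g < p - 1"
    using w(1) eval_zeta_reduce by (metis Z_zetaE)
  have "smult (int p ^ n) g = 0 \<or> degree (smult (int p ^ n) g) < p - 1"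
    using g(2) by (cases "g = 0") (auto simp: le_less_trans[OF degree_smult_le])
  moreover have "eval_zeta f = eval_zeta (smult (int p ^ n) g)" using f w g by simp
  ultimately have "f = smult (int p ^ n) g" using eval_zeta_unique f(2) by blast
  hence "int p ^ n dvd coeff f i" by simp
  hence "\<bar>int p ^ n\<bar> \<le> \<bar>coeff f i\<bar>" by (rule dvd_imp_le_int[OF ci])
  hence "int p ^ n \<le> \<bar>coeff f i\<bar>" by simp
  moreover have "n < p ^ n" using less_exp[of n] power_mono[of 2 p n] p_ge_2 by linarith
  hence "int n < int (p ^ n)" by linarith
  hence "int n < int p ^ n" by simp
  ultimately show False unfolding n_def by simp
qed

lemma lam_adic_decomposition:
  assumes x: "x \<in> Z_zeta" "x \<noteq> 0"
  obtains e y where "y \<in> Z_zeta" "x = lam ^ e * y" "\<not> zeta_dvd lam y"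
proof -
  obtain N where "\<not> zeta_dvd (lam ^ N) x" using lam_power_not_dvd[OF x] by auto
  hence "\<exists>e. zeta_dvd (lam ^ e) x \<and> \<not> zeta_dvd (lam ^ Suc e) x"
  proof (induction N)
    case 0 thus ?case using one_zeta_dvd[OF x(1)] by simp
  next
    case (Suc N) thus ?case by blast
  qed
  then obtain e where e: "zeta_dvd (lam ^ e) x" "\<not> zeta_dvd (lam ^ Suc e) x" by blast
  then obtain y where y: "y \<in> Z_zeta" "x = lam ^ e * y" unfolding zeta_dvd_def by auto
  have "\<not> zeta_dvd lam y"
  proof
    assume "zeta_dvd lam y"
    then obtain v where "v \<in> Z_zeta" "y = lam * v" unfolding zeta_dvd_def by auto
    hence "zeta_dvd (lam ^ Suc e) x" using y unfolding zeta_dvd_def by (auto simp: mult_ac)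
    thus False using e(2) by simp
  qed
  thus ?thesis using that y by blast
qed

lemma lam_dvd_of_power_eq:
  assumes "lam ^ m * X = lam ^ n * Y" "m < n" "Y \<in> Z_zeta"
  shows "zeta_dvd lam X"
proof -
  have "lam ^ n = lam ^ (m + Suc (n - m - 1))" using assms(2) by simp
  also have "\<dots> = lam ^ m * (lam * lam ^ (n - m - 1))" by (simp add: power_add)
  finally have "lam ^ m * X = lam ^ m * (lam * (lam ^ (n - m - 1) * Y))"
    using assms(1) by (simp add: mult_ac)
  hence "X = lam * (lam ^ (n - m - 1) * Y)" using lam_nonzero by simp
  thus ?thesis unfolding zeta_dvd_def
    using assms(3) by (auto intro!: Z_zeta.mult_mem Z_zeta.power_mem lam_in_Z_zeta)
qed

lemma lam_valuation_unique:
  assumes eq: "lam ^ m * x = lam ^ n * y" and x: "x \<in> Z_zeta" "\<not> zeta_dvd lam x"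
    and y: "y \<in> Z_zeta" "\<not> zeta_dvd lam y"
  shows "m = n"
proof (rule ccontr)
  assume "m \<noteq> n"
  then consider "m < n" | "n < m" by linarith
  thus False
  proof cases
    case 1 thus False using lam_dvd_of_power_eq[OF eq _ y(1)] x(2) by blast
  next
    case 2 thus False using lam_dvd_of_power_eq[OF eq[symmetric] _ x(1)] y(2) by blast
  qed
qed

text \<open>All inner binomial coefficients are divisible by \<open>p\<close>, hence by \<open>\<lambda>\<^sup>3\<close> once \<open>p - 1 \<ge> 3\<close>.\<close>

lemma lam_cube_dvd_power_p_diff:
  assumes p: "p > 3" and x: "x \<in> Z_zeta" and y: "y \<in> Z_zeta" and d: "zeta_dvd lam (x - y)"
  shows "zeta_dvd (lam ^ 3) (x ^ p - y ^ p)"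
proof -
  obtain t where t: "t \<in> Z_zeta" "x = lam * t + y"
    using d unfolding zeta_dvd_def by (auto simp: algebra_simps)
  define F where "F i = of_nat (p choose i) * (lam * t) ^ i * y ^ (p - i)" for i
  have "x ^ p = (\<Sum>i\<le>p. F i)" unfolding t(2) F_def by (rule binomial_ring)
  also have "\<dots> = F 0 + (\<Sum>i\<le>p - 1. F (Suc i))"
    using sum.atMost_Suc_shift[of F "p - 1"] p_pos by (simp add: Suc_diff_1)
  finally have eq: "x ^ p - y ^ p = (\<Sum>i\<le>p - 1. F (Suc i))" by (simp add: F_def)
  have lam3_p: "zeta_dvd (lam ^ 3) (of_nat p)" using lam_power_dvd_p[of 3] p by simp
  have "zeta_dvd (lam ^ 3) (F (Suc i))" if i: "i \<le> p - 1" for i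
  proof (cases "Suc i < p")
    case True
    hence "p dvd p choose Suc i" using prime_p by (intro dvd_choose_prime) auto
    then obtain m where m: "p choose Suc i = p * m" by auto
    have "F (Suc i) = of_nat p * (of_nat m * (lam * t) ^ Suc i * y ^ (p - Suc i))"
      unfolding F_def m by (simp only: of_nat_mult mult.assoc)
    moreover have "of_nat m * (lam * t) ^ Suc i * y ^ (p - Suc i) \<in> Z_zeta"
      by (intro Z_zeta.mult_mem Z_zeta.power_mem Z_zeta.of_nat_mem lam_in_Z_zeta t(1) y)
    ultimately show ?thesis using zeta_dvd_mult_right[OF lam3_p] by simp
  next
    case False
    hence "Suc i = p" using i p_pos by auto
    have "lam ^ p = lam ^ 3 * lam ^ (p - 3)" using p by (simp add: power_add[symmetric])
    hence "F (Suc i) = lam ^ 3 * (lam ^ (p - 3) * t ^ p)"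
      unfolding F_def \<open>Suc i = p\<close> by (simp add: power_mult_distrib)
    moreover have "lam ^ (p - 3) * t ^ p \<in> Z_zeta"
      by (intro Z_zeta.mult_mem Z_zeta.power_mem lam_in_Z_zeta t(1))
    ultimately show ?thesis unfolding zeta_dvd_def by blast
  qed
  thus ?thesis unfolding eq by (intro zeta_dvd_sum) auto
qed

end

section \<open>\<open>\<zeta>\<^sup>k + \<zeta>\<^sup>-\<^sup>k\<close> is not a \<open>p\<close>-th power in \<open>\<rat>(\<zeta>)\<close>\<close>

context prime_root_of_unity
begin

definition Q_zeta :: "complex set" where
  "Q_zeta = {x / y | x y. x \<in> Z_zeta \<and> y \<in> Z_zeta \<and> y \<noteq> 0}"

lemma Q_zetaI: "x \<in> Z_zeta \<Longrightarrow> y \<in> Z_zeta \<Longrightarrow> y \<noteq> 0 \<Longrightarrow> x / y \<in> Q_zeta"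
  unfolding Q_zeta_def by blast

lemma Q_zeta_subfield: "is_subfield Q_zeta"
  unfolding is_subfield_def
proof (intro conjI ballI impI)
  show "0 \<in> Q_zeta" "1 \<in> Q_zeta"
    using Q_zetaI[OF Z_zeta.zero_mem Z_zeta.one_mem] Q_zetaI[OF Z_zeta.one_mem Z_zeta.one_mem] by simp_all
next
  fix u v assume "u \<in> Q_zeta" "v \<in> Q_zeta"
  then obtain a b c d where abcd: "u = a / b" "v = c / d" "a \<in> Z_zeta" "b \<in> Z_zeta" "c \<in> Z_zeta"
    "d \<in> Z_zeta" "b \<noteq> 0" "d \<noteq> 0" unfolding Q_zeta_def by blast
  have "u + v = (a * d + c * b) / (b * d)" "u * v = (a * c) / (b * d)"
    using abcd by (simp_all add: field_simps)
  moreover have "a * d + c * b \<in> Z_zeta" "a * c \<in> Z_zeta" "b * d \<in> Z_zeta" "b * d \<noteq> 0"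
    using abcd by (simp_all add: Z_zeta.add_mem Z_zeta.mult_mem)
  ultimately show "u + v \<in> Q_zeta" "u * v \<in> Q_zeta" using Q_zetaI by simp_all
next
  fix u assume "u \<in> Q_zeta"
  then obtain a b where ab: "u = a / b" "a \<in> Z_zeta" "b \<in> Z_zeta" "b \<noteq> 0"
    unfolding Q_zeta_def by blast
  have "- u = (- a) / b" using ab by simp
  thus "- u \<in> Q_zeta" using Q_zetaI[OF Z_zeta.uminus_mem[OF ab(2)] ab(3,4)] by simp
  assume "u \<noteq> 0"
  hence "inverse u = b / a" "a \<noteq> 0" using ab by auto
  thus "inverse u \<in> Q_zeta" using Q_zetaI[OF ab(3,2)] by simp
qed

lemma gen_field_zeta_subset_Q_zeta: "gen_field {\<zeta>} \<subseteq> Q_zeta"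
  using gen_field_least[OF Q_zeta_subfield] Q_zetaI[OF zeta_in_Z_zeta Z_zeta.one_mem] by simp

text \<open>Here \<open>\<mu> = \<zeta>\<^sup>-\<^sup>k (1 + \<zeta> + \<dots> + \<zeta>\<^sup>k\<^sup>-\<^sup>1)\<^sup>2 \<equiv> k\<^sup>2 (mod \<lambda>)\<close>.\<close>

lemma zeta_power_plus_inverse_eq:
  assumes k: "1 \<le> k" "k < p"
  obtains \<mu> where "\<mu> \<in> Z_zeta" "\<not> zeta_dvd lam \<mu>" "\<zeta> ^ k + inverse (\<zeta> ^ k) = 2 + lam ^ 2 * \<mu>"
proof -
  have zz: "\<zeta> ^ (p - k) * \<zeta> ^ k = 1"
    unfolding power_add[symmetric] using k zeta_power_p by simp
  hence inv: "inverse (\<zeta> ^ k) = \<zeta> ^ (p - k)" by (intro inverse_unique) (metis mult.commute)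
  define s where "s = (\<Sum>i<k. monom (1::int) i)"
  define \<mu> where "\<mu> = eval_zeta (monom 1 (p - k) * s ^ 2)"
  have s: "\<zeta> ^ k - 1 = (\<zeta> - 1) * eval_zeta s"
    unfolding s_def eval_zeta_sum by (simp add: power_diff_1_eq)
  have "lam ^ 2 * \<mu> = \<zeta> ^ (p - k) * ((\<zeta> - 1) * eval_zeta s) ^ 2"
    unfolding \<mu>_def lam_def by (simp add: power2_eq_square algebra_simps)
  also have "\<dots> = (\<zeta> ^ (p - k) * \<zeta> ^ k) * \<zeta> ^ k - 2 * (\<zeta> ^ (p - k) * \<zeta> ^ k) + \<zeta> ^ (p - k)"
    unfolding s[symmetric] by (simp add: power2_eq_square algebra_simps)
  finally have eq: "\<zeta> ^ k + inverse (\<zeta> ^ k) = 2 + lam ^ 2 * \<mu>"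
    unfolding zz inv by simp
  have "prime (int p)" using prime_p by simp
  moreover have "\<not> int p dvd int k" using k by (auto simp: int_dvd_int_iff dest: dvd_imp_le)
  ultimately have "\<not> int p dvd int k ^ 2" by (simp add: prime_dvd_power_iff)
  hence "\<not> zeta_dvd lam \<mu>"
    unfolding \<mu>_def lam_dvd_eval_zeta_iff s_def by (simp add: poly_sum poly_monom)
  moreover have "\<mu> \<in> Z_zeta" unfolding \<mu>_def by (rule eval_zeta_in_Z_zeta)
  ultimately show ?thesis using that eq by blast
qed

lemma p_th_power_in_Q_zeta_coprime:
  assumes "\<beta> \<in> Q_zeta" "\<beta> ^ p = a" "a \<in> Z_zeta" "\<not> zeta_dvd lam a"
  obtains g d where "g \<in> Z_zeta" "d \<in> Z_zeta" "\<not> zeta_dvd lam d" "g ^ p = d ^ p * a"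
proof -
  obtain g0 d0 where gd0: "\<beta> = g0 / d0" "g0 \<in> Z_zeta" "d0 \<in> Z_zeta" "d0 \<noteq> 0"
    using assms(1) unfolding Q_zeta_def by blast
  have "a = g0 ^ p / d0 ^ p" unfolding assms(2)[symmetric] gd0(1) by (rule power_divide)
  hence eq0: "g0 ^ p = d0 ^ p * a" using gd0(4) by (simp add: eq_divide_eq mult.commute)
  have "a \<noteq> 0" using assms(4) zeta_dvd_0 by metis
  have "g0 \<noteq> 0"
  proof
    assume "g0 = 0"
    hence "d0 ^ p * a = 0" using eq0 p_pos by (simp add: zero_power)
    thus False using \<open>a \<noteq> 0\<close> gd0(4) by simp
  qed
  obtain e d where d: "d \<in> Z_zeta" "d0 = lam ^ e * d" "\<not> zeta_dvd lam d"
    by (rule lam_adic_decomposition[OF gd0(3,4)])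
  obtain e' g where g: "g \<in> Z_zeta" "g0 = lam ^ e' * g" "\<not> zeta_dvd lam g"
    by (rule lam_adic_decomposition[OF gd0(2) \<open>g0 \<noteq> 0\<close>])
  have gp: "g ^ p \<in> Z_zeta" "\<not> zeta_dvd lam (g ^ p)"
    using Z_zeta.power_mem[OF g(1)] lam_dvd_power[OF g(1)] g(3) by blast+
  have dp: "d ^ p * a \<in> Z_zeta" "\<not> zeta_dvd lam (d ^ p * a)"
    using Z_zeta.mult_mem[OF Z_zeta.power_mem[OF d(1)] assms(3)]
      lam_dvd_mult[OF Z_zeta.power_mem[OF d(1)] assms(3)] lam_dvd_power[OF d(1)] d(3) assms(4)
    by blast+
  have eq: "lam ^ (e' * p) * g ^ p = lam ^ (e * p) * (d ^ p * a)"
    using eq0 unfolding d(2) g(2) by (simp add: power_mult_distrib power_mult mult_ac)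
  hence "e' * p = e * p" by (rule lam_valuation_unique[OF _ gp dp])
  hence "g ^ p = d ^ p * a" using eq lam_nonzero p_pos by simp
  thus ?thesis by (rule that[OF g(1) d(1) d(3)])
qed

text \<open>Reduce \<open>g\<^sup>p = d\<^sup>p (2 + \<lambda>\<^sup>2 \<mu>)\<close> modulo \<open>\<lambda>\<^sup>3\<close>: with \<open>g \<equiv> m\<close>, \<open>d \<equiv> n\<close> modulo \<open>\<lambda>\<close>
  (\<open>m, n \<in> \<int>\<close>) the rational integer \<open>m\<^sup>p - 2 n\<^sup>p\<close> is divisible by \<open>\<lambda>\<^sup>2\<close>, hence by \<open>p\<close> and by
  \<open>\<lambda>\<^sup>3\<close>, which leaves \<open>\<lambda> | n\<^sup>p \<mu>\<close>.\<close>

lemma no_coprime_p_th_power_ratio_2_plus_lam_sq: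
  assumes p: "p > 3" and g: "g \<in> Z_zeta" and d: "d \<in> Z_zeta" "\<not> zeta_dvd lam d"
    and \<mu>: "\<mu> \<in> Z_zeta" "\<not> zeta_dvd lam \<mu>" and eq: "g ^ p = d ^ p * (2 + lam ^ 2 * \<mu>)"
  shows False
proof -
  obtain fg fd where fgd: "g = eval_zeta fg" "d = eval_zeta fd" using g d by (auto elim!: Z_zetaE)
  define m where "m = poly fg 1"
  define n where "n = poly fd 1"
  have dn: "zeta_dvd lam (d - of_int n)" unfolding n_def fgd by (rule lam_dvd_eval_zeta_diff)
  have "zeta_dvd lam (g - of_int m)" unfolding m_def fgd by (rule lam_dvd_eval_zeta_diff)
  hence gp: "zeta_dvd (lam ^ 3) (g ^ p - of_int m ^ p)"
    by (rule lam_cube_dvd_power_p_diff[OF p g of_int_in_Z_zeta])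
  have dp: "zeta_dvd (lam ^ 3) (d ^ p - of_int n ^ p)"
    by (rule lam_cube_dvd_power_p_diff[OF p d(1) of_int_in_Z_zeta dn])
  define N where "N = m ^ p - 2 * n ^ p"
  have key: "of_int N - lam ^ 2 * (of_int n ^ p * \<mu>)
      = - (g ^ p - of_int m ^ p) + (d ^ p - of_int n ^ p) * (2 + lam ^ 2 * \<mu>)"
    unfolding N_def eq by (simp add: algebra_simps)
  have "2 + lam ^ 2 * \<mu> \<in> Z_zeta"
    using Z_zeta.of_nat_mem[of 2] \<mu>(1) lam_in_Z_zeta
    by (auto intro!: Z_zeta.add_mem Z_zeta.mult_mem Z_zeta.power_mem)
  hence D1: "zeta_dvd (lam ^ 3) (of_int N - lam ^ 2 * (of_int n ^ p * \<mu>))"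
    unfolding key by (intro zeta_dvd_add zeta_dvd_uminus gp zeta_dvd_mult_right[OF dp])
  have "zeta_dvd lam (lam ^ 3)" "zeta_dvd lam (lam ^ 2 * (of_int n ^ p * \<mu>))"
    using zeta_dvd_power_mono[of 1 3 lam] zeta_dvd_power_mono[of 1 2 lam] lam_in_Z_zeta
    by (auto intro!: zeta_dvd_mult_right Z_zeta.mult_mem Z_zeta.power_mem of_int_in_Z_zeta \<mu>(1))
  from zeta_dvd_add[OF zeta_dvd_trans[OF this(1) D1] this(2)]
  have "zeta_dvd lam (of_int N)" by simp
  hence "int p dvd N" by (simp only: lam_dvd_of_int_iff)
  then obtain c where "N = int p * c" by (rule dvdE)
  hence "zeta_dvd (lam ^ 3) (of_int N)"
    using zeta_dvd_mult_right[OF lam_power_dvd_p[of 3] of_int_in_Z_zeta[of c]] p by simp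
  from zeta_dvd_diff[OF this D1]
  have "zeta_dvd (lam ^ 3) (lam ^ 2 * (of_int n ^ p * \<mu>))" by simp
  moreover have "lam ^ 3 = lam ^ 2 * lam" by (simp add: power3_eq_cube power2_eq_square)
  ultimately have "zeta_dvd (lam ^ 2 * lam) (lam ^ 2 * (of_int n ^ p * \<mu>))" by simp
  hence "zeta_dvd lam (of_int n ^ p * \<mu>)" by (rule zeta_dvd_cancel[rotated]) (use lam_nonzero in simp)
  hence "zeta_dvd lam (of_int n ^ p)"
    using lam_dvd_mult[OF Z_zeta.power_mem[OF of_int_in_Z_zeta] \<mu>(1)] \<mu>(2) by simp
  hence "zeta_dvd lam (of_int n)" by (rule lam_dvd_power[OF of_int_in_Z_zeta])
  from zeta_dvd_add[OF dn this] show False using d(2) by simp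
qed

theorem zeta_power_plus_inverse_not_p_th_power:
  assumes "p > 3" "1 \<le> k" "k < p" "\<beta> \<in> gen_field {\<zeta>}"
  shows "\<beta> ^ p \<noteq> \<zeta> ^ k + inverse (\<zeta> ^ k)"
proof
  obtain \<mu> where \<mu>: "\<mu> \<in> Z_zeta" "\<not> zeta_dvd lam \<mu>" "\<zeta> ^ k + inverse (\<zeta> ^ k) = 2 + lam ^ 2 * \<mu>"
    by (rule zeta_power_plus_inverse_eq[OF assms(2,3)])
  assume "\<beta> ^ p = \<zeta> ^ k + inverse (\<zeta> ^ k)"
  hence root: "\<beta> ^ p = 2 + lam ^ 2 * \<mu>" using \<mu>(3) by simp
  have lam2: "zeta_dvd lam (lam ^ 2 * \<mu>)"
    unfolding zeta_dvd_def using \<mu>(1) lam_in_Z_zeta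
    by (intro bexI[of _ "lam * \<mu>"] Z_zeta.mult_mem) (auto simp: power2_eq_square)
  have "2 + lam ^ 2 * \<mu> \<in> Z_zeta"
    using Z_zeta.of_nat_mem[of 2] by (auto intro!: Z_zeta.add_mem Z_zeta.mult_mem Z_zeta.power_mem
        lam_in_Z_zeta \<mu>(1))
  moreover have "\<not> zeta_dvd lam (2 + lam ^ 2 * \<mu>)"
  proof
    assume "zeta_dvd lam (2 + lam ^ 2 * \<mu>)"
    from zeta_dvd_diff[OF this lam2] have "zeta_dvd lam (of_int 2)" by simp
    hence "int p dvd int 2" by (simp only: lam_dvd_of_int_iff of_nat_numeral)
    hence "p dvd 2" by (simp only: int_dvd_int_iff)
    thus False using assms(1) by (auto dest: dvd_imp_le)
  qed
  moreover have "\<beta> \<in> Q_zeta" using gen_field_zeta_subset_Q_zeta assms(4) by blast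
  ultimately obtain g d where "g \<in> Z_zeta" "d \<in> Z_zeta" "\<not> zeta_dvd lam d"
      "g ^ p = d ^ p * (2 + lam ^ 2 * \<mu>)"
    using p_th_power_in_Q_zeta_coprime[OF _ root] by metis
  from no_coprime_p_th_power_ratio_2_plus_lam_sq[OF assms(1) this(1-3) \<mu>(1,2) this(4)] show False .
qed

end

section \<open>Kummer extensions of prime degree\<close>

lemma poly_pcompose_scale: "poly (g \<circ>\<^sub>p [:0, c:]) w = poly g (c * (w :: 'a :: comm_ring_1))"
  by (simp add: poly_pcompose mult.commute)

lemma pcompose_scale_scale:
  "(g \<circ>\<^sub>p [:0, c:]) \<circ>\<^sub>p [:0, d:] = g \<circ>\<^sub>p [:0, c * (d :: 'a :: comm_ring_1):]"
proof -
  have "[:0, c:] \<circ>\<^sub>p [:0, d:] = [:0, c * d:]" by (simp add: pcompose_pCons)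
  thus ?thesis by (simp add: pcompose_assoc[symmetric])
qed

lemma poly_eq_sum_below:
  fixes r :: "'a :: comm_semiring_1 poly"
  assumes "r = 0 \<or> degree r < n"
  shows "poly r x = (\<Sum>i<n. coeff r i * x ^ i)"
proof -
  have "r = (\<Sum>i<n. monom (coeff r i) i)"
    by (rule poly_eqI) (use assms in \<open>auto simp: coeff_sum coeff_monom intro: coeff_eq_0\<close>)
  hence "poly r x = poly (\<Sum>i<n. monom (coeff r i) i) x" by simp
  thus ?thesis by (simp add: poly_sum poly_monom)
qed

locale kummer_extension = prime_root_of_unity +
  fixes K :: "complex set" and \<alpha> a :: complex
  assumes subfield_K: "is_subfield K" and zeta_in_K: "\<zeta> \<in> K" and a_in_K: "a \<in> K"
    and alpha_power_p: "\<alpha> ^ p = a" and no_root_in_K: "\<And>\<beta>. \<beta> \<in> K \<Longrightarrow> \<beta> ^ p \<noteq> a"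
begin

sublocale K: subring_set K
  by (rule subfield_imp_subring_set[OF subfield_K])

lemma a_nonzero: "a \<noteq> 0"
  using no_root_in_K[OF K.zero_mem] p_pos by (auto simp: zero_power)

lemma alpha_nonzero: "\<alpha> \<noteq> 0"
  using a_nonzero alpha_power_p p_pos by (auto simp: zero_power)

lemma zeta_power_alpha_power_p: "(\<zeta> ^ j * \<alpha>) ^ p = a"
  by (simp add: power_mult_distrib power_mult[symmetric] mult.commute[of j] power_mult
      zeta_power_p alpha_power_p)

lemma kummer_root_eq: assumes "w ^ p = a" shows "\<exists>j<p. w = \<zeta> ^ j * \<alpha>"
proof -
  have "(w / \<alpha>) ^ p = 1" using assms alpha_power_p a_nonzero by (simp add: power_divide)
  then obtain j where "j < p" "w / \<alpha> = \<zeta> ^ j" using root_of_unity_is_zeta_power by blast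
  thus ?thesis using alpha_nonzero by (auto simp: field_simps)
qed

definition kummer_poly :: "complex poly" where "kummer_poly = monom 1 p - [:a:]"

lemma poly_over_kummer_poly: "poly_over K kummer_poly"
  unfolding kummer_poly_def
  by (intro K.poly_over_diff K.poly_over_monom K.poly_over_const K.one_mem a_in_K)

lemma coeff_kummer_poly: "coeff kummer_poly i = (if i = p then 1 else if i = 0 then - a else 0)"
  unfolding kummer_poly_def using p_pos by (auto simp: coeff_monom coeff_pCons split: nat.split)

lemma degree_kummer_poly: "degree kummer_poly = p"
proof (rule antisym)
  show "degree kummer_poly \<le> p" by (rule degree_le) (auto simp: coeff_kummer_poly)
  show "p \<le> degree kummer_poly" by (rule le_degree) (simp add: coeff_kummer_poly)
qed

lemma lead_coeff_kummer_poly: "lead_coeff kummer_poly = 1"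
  unfolding degree_kummer_poly by (simp add: coeff_kummer_poly)

lemma poly_kummer_poly: "poly kummer_poly w = w ^ p - a"
  unfolding kummer_poly_def by (simp add: poly_monom)

lemma kummer_poly_divmod:
  assumes "poly_over K g"
  obtains q r where "poly_over K q" "poly_over K r" "g = kummer_poly * q + r" "r = 0 \<or> degree r < p"
  using K.poly_over_monic_divmod[OF lead_coeff_kummer_poly poly_over_kummer_poly assms]
    degree_kummer_poly by metis

lemma kummer_poly_scale_zeta: "kummer_poly \<circ>\<^sub>p [:0, \<zeta>:] = kummer_poly"
  by (rule poly_eqI) (auto simp: coeff_pcompose_linear coeff_kummer_poly zeta_power_p)

lemma poly_over_scale: "poly_over K g \<Longrightarrow> c \<in> K \<Longrightarrow> poly_over K (g \<circ>\<^sub>p [:0, c:])"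
  unfolding poly_over_def coeff_pcompose_linear by (auto intro: K.mult_mem K.power_mem)

lemma poly_at_zero_of_roots_times_alpha:
  "\<forall>x\<in>set xs. \<exists>j. x = \<zeta> ^ j * \<alpha> \<Longrightarrow>
    \<exists>J. poly (\<Prod>x\<leftarrow>xs. [:- x, 1:]) 0 = (- 1) ^ length xs * \<zeta> ^ J * \<alpha> ^ length xs"
proof (induction xs)
  case Nil thus ?case by (intro exI[of _ 0]) simp
next
  case (Cons x xs)
  then obtain J where J: "poly (\<Prod>x\<leftarrow>xs. [:- x, 1:]) 0 = (- 1) ^ length xs * \<zeta> ^ J * \<alpha> ^ length xs"
    by auto
  obtain j where j: "x = \<zeta> ^ j * \<alpha>" using Cons.prems by auto
  have "poly (\<Prod>x\<leftarrow>x # xs. [:- x, 1:]) 0 = (- x) * poly (\<Prod>x\<leftarrow>xs. [:- x, 1:]) 0" by simp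
  also have "\<dots> = (- 1) ^ length (x # xs) * \<zeta> ^ (j + J) * \<alpha> ^ length (x # xs)"
    unfolding J j by (simp add: power_add)
  finally show ?case by blast
qed

lemma alpha_power_notin_K: assumes "0 < d" "d < p" shows "\<alpha> ^ d \<notin> K"
proof
  assume "\<alpha> ^ d \<in> K"
  have "gcd d p dvd p" by simp
  hence "gcd d p = 1 \<or> gcd d p = p" using prime_p by (simp add: prime_nat_iff)
  moreover have "gcd d p \<noteq> p" using assms by (metis gcd_dvd1 dvd_imp_le not_le)
  ultimately obtain u v where uv: "d * u = p * v + 1" using bezout_nat[of d p] assms by auto
  have "(\<alpha> ^ d) ^ u = a ^ v * \<alpha>"
    by (simp add: power_mult[symmetric] uv power_add alpha_power_p[symmetric])
  hence "\<alpha> = (\<alpha> ^ d) ^ u / a ^ v" using a_nonzero by (simp add: field_simps)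
  hence "\<alpha> \<in> K"
    using \<open>\<alpha> ^ d \<in> K\<close> a_in_K subfield_K by (metis K.power_mem subfield_divide_mem)
  thus False using no_root_in_K alpha_power_p by blast
qed

text \<open>A monic factor of \<open>X\<^sup>p - a\<close> is a product of factors \<open>X - \<zeta>\<^sup>j \<alpha>\<close>, so its constant term is
  \<open>\<alpha>\<^sup>d\<close> up to a root of unity.\<close>

lemma monic_factor_of_kummer_poly:
  assumes m: "poly_over K m" "lead_coeff m = 1" "m dvd kummer_poly" "degree m < p"
  shows "degree m = 0"
proof -
  obtain xs where xs: "smult (lead_coeff m) (\<Prod>x\<leftarrow>xs. [:- x, 1:]) = m" "length xs = degree m"
    using fundamental_theorem_algebra_factorized[of m] by blast
  have m_eq: "m = (\<Prod>x\<leftarrow>xs. [:- x, 1:])" using xs(1) m(2) by simp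
  have "\<forall>x\<in>set xs. \<exists>j. x = \<zeta> ^ j * \<alpha>"
  proof
    fix x assume x: "x \<in> set xs"
    have "poly m x = (\<Prod>y\<leftarrow>xs. x - y)" unfolding m_eq poly_prod_list by (simp add: o_def)
    hence "poly m x = 0" using x by (simp add: prod_list_zero_iff)
    hence "poly kummer_poly x = 0" using m(3) by (auto elim: dvdE)
    thus "\<exists>j. x = \<zeta> ^ j * \<alpha>" using kummer_root_eq by (auto simp: poly_kummer_poly)
  qed
  then obtain J where J: "poly m 0 = (- 1) ^ length xs * \<zeta> ^ J * \<alpha> ^ length xs"
    using poly_at_zero_of_roots_times_alpha m_eq by metis
  have "poly m 0 \<in> K" using m(1) unfolding poly_0_coeff_0 poly_over_def by auto
  moreover have "(- 1) ^ length xs * \<zeta> ^ J \<in> K" "(- 1) ^ length xs * \<zeta> ^ J \<noteq> 0"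
    using zeta_nonzero by (auto intro!: K.mult_mem K.power_mem K.uminus_mem K.one_mem zeta_in_K)
  ultimately have "\<alpha> ^ length xs \<in> K"
    using J subfield_divide_mem[OF subfield_K] by (metis nonzero_mult_div_cancel_left)
  thus ?thesis using alpha_power_notin_K xs(2) m(4) by fastforce
qed

text \<open>The irreducibility of \<open>X\<^sup>p - a\<close> over \<open>K\<close>, via a polynomial of least degree killing \<open>\<alpha>\<close>.\<close>

lemma alpha_annihilator_degree:
  assumes g: "poly_over K g" "g \<noteq> 0" "poly g \<alpha> = 0"
  shows "p \<le> degree g"
proof (rule ccontr)
  assume "\<not> p \<le> degree g"
  define kills where "kills f \<longleftrightarrow> poly_over K f \<and> f \<noteq> 0 \<and> poly f \<alpha> = 0" for f
  define n where "n = (LEAST n. \<exists>f. kills f \<and> degree f = n)"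
  obtain m where m: "kills m" "degree m = n"
    using LeastI_ex[of "\<lambda>n. \<exists>f. kills f \<and> degree f = n"] g unfolding n_def kills_def by blast
  have m_min: "degree m \<le> degree f" if "kills f" for f
    unfolding m(2) n_def by (rule Least_le) (use that in blast)
  define m' where "m' = smult (inverse (lead_coeff m)) m"
  have l0: "lead_coeff m \<noteq> 0" using m(1) unfolding kills_def by simp
  have "lead_coeff m \<in> K" using m(1) unfolding kills_def poly_over_def by auto
  hence m'K: "poly_over K m'"
    unfolding m'_def using m(1) subfield_inverse_mem[OF subfield_K] unfolding kills_def
    by (intro K.poly_over_smult) auto
  have dm': "degree m' = degree m" unfolding m'_def using l0 by simp
  have lm': "lead_coeff m' = 1" unfolding m'_def dm' using l0 by simp
  have "kills m'" using m(1) l0 m'K unfolding kills_def m'_def by auto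
  obtain q r where qr: "poly_over K q" "poly_over K r" "kummer_poly = m' * q + r"
      "r = 0 \<or> degree r < degree m'"
    using K.poly_over_monic_divmod[OF lm' m'K poly_over_kummer_poly] by blast
  have "poly r \<alpha> = 0"
    using qr(3) \<open>kills m'\<close> poly_kummer_poly[of \<alpha>] alpha_power_p unfolding kills_def
    by (metis add_0 diff_self mult_zero_left poly_add poly_mult)
  hence "r = 0" using qr(2,4) m_min[of r] dm' unfolding kills_def by fastforce
  hence "m' dvd kummer_poly" using qr(3) by simp
  moreover have "degree m' < p" using dm' m_min[OF m(1)] m_min[of g] g \<open>\<not> p \<le> degree g\<close>
    unfolding kills_def by fastforce
  ultimately have "degree m' = 0" using monic_factor_of_kummer_poly m'K lm' by blast
  then obtain c where "m' = [:c:]" by (metis degree_eq_zeroE)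
  thus False using \<open>kills m'\<close> unfolding kills_def by simp
qed

lemma root_of_alpha_annihilator:
  assumes g: "poly_over K g" "poly g \<alpha> = 0" and w: "w ^ p = a"
  shows "poly g w = 0"
proof -
  obtain q r where qr: "poly_over K q" "poly_over K r" "g = kummer_poly * q + r" "r = 0 \<or> degree r < p"
    by (rule kummer_poly_divmod[OF g(1)])
  have "poly r \<alpha> = 0" using g(2) qr(3) alpha_power_p by (simp add: poly_kummer_poly)
  hence "r = 0" using alpha_annihilator_degree[OF qr(2)] qr(4) by fastforce
  thus ?thesis using qr(3) w by (simp add: poly_kummer_poly)
qed

definition K_alpha :: "complex set" where "K_alpha = {poly g \<alpha> | g. poly_over K g}"

lemma K_alphaI: "poly_over K g \<Longrightarrow> poly g \<alpha> \<in> K_alpha"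
  unfolding K_alpha_def by blast

lemma K_alphaE: assumes "x \<in> K_alpha" obtains g where "poly_over K g" "x = poly g \<alpha>"
  using assms unfolding K_alpha_def by blast

lemma K_subset_K_alpha: "K \<subseteq> K_alpha"
  using K_alphaI[OF K.poly_over_const] by fastforce

lemma alpha_in_K_alpha: "\<alpha> \<in> K_alpha"
  using K_alphaI[OF K.poly_over_pCons[OF K.zero_mem K.poly_over_1]] by simp

lemma K_alpha_add: "x \<in> K_alpha \<Longrightarrow> y \<in> K_alpha \<Longrightarrow> x + y \<in> K_alpha"
  and K_alpha_mult: "x \<in> K_alpha \<Longrightarrow> y \<in> K_alpha \<Longrightarrow> x * y \<in> K_alpha"
  and K_alpha_uminus: "x \<in> K_alpha \<Longrightarrow> - x \<in> K_alpha"
  by (auto elim!: K_alphaE intro!: K_alphaI[of "_ + _", simplified] K_alphaI[of "_ * _", simplified]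
      K_alphaI[of "- _", simplified] K.poly_over_add K.poly_over_mult K.poly_over_uminus)

lemma value_at_alpha_in_K_if_scale_invariant:
  assumes H: "poly_over K H" "H \<circ>\<^sub>p [:0, \<zeta>:] = H"
  shows "poly H \<alpha> \<in> K"
proof -
  obtain q r where qr: "poly_over K q" "poly_over K r" "H = kummer_poly * q + r" "r = 0 \<or> degree r < p"
    by (rule kummer_poly_divmod[OF H(1)])
  have "H = kummer_poly * (q \<circ>\<^sub>p [:0, \<zeta>:]) + r \<circ>\<^sub>p [:0, \<zeta>:]"
    by (subst H(2)[symmetric]) (simp add: qr(3) pcompose_add pcompose_mult kummer_poly_scale_zeta)
  hence eq: "kummer_poly * (q - q \<circ>\<^sub>p [:0, \<zeta>:]) = r \<circ>\<^sub>p [:0, \<zeta>:] - r"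
    using qr(3) by (simp add: algebra_simps)
  have r_inv: "r \<circ>\<^sub>p [:0, \<zeta>:] = r"
  proof (rule ccontr)
    assume ne: "r \<circ>\<^sub>p [:0, \<zeta>:] \<noteq> r"
    hence "q - q \<circ>\<^sub>p [:0, \<zeta>:] \<noteq> 0" using eq by auto
    moreover have "kummer_poly \<noteq> 0" using lead_coeff_kummer_poly by auto
    ultimately have big: "degree (kummer_poly * (q - q \<circ>\<^sub>p [:0, \<zeta>:])) \<ge> p"
      using degree_kummer_poly by (simp add: degree_mult_eq)
    have "r \<noteq> 0" using ne by auto
    hence "degree r \<le> p - 1" using qr(4) by simp
    moreover have "degree (r \<circ>\<^sub>p [:0, \<zeta>:]) = degree r"
      using zeta_nonzero by (simp add: degree_pcompose)
    ultimately have "degree (r \<circ>\<^sub>p [:0, \<zeta>:] - r) \<le> p - 1" by (intro degree_diff_le) simp_all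
    thus False using big eq p_pos by simp
  qed
  have "coeff r i = 0" if "i > 0" for i
  proof (cases "i < p")
    case True
    have "\<zeta> ^ i * coeff r i = coeff r i"
      using arg_cong[OF r_inv, of "\<lambda>f. coeff f i"] by (simp add: coeff_pcompose_linear)
    moreover have "\<zeta> ^ i \<noteq> 1" using True that zeta_power_eq_1_iff[of i] by (auto dest: dvd_imp_le)
    ultimately show ?thesis by (metis mult_cancel_right2)
  next
    case False
    thus ?thesis using qr(4) by (auto intro: coeff_eq_0)
  qed
  hence "degree r = 0" using degree_le[of 0 r] by auto
  then obtain c where r: "r = [:c:]" by (auto elim: degree_eq_zeroE)
  have "c \<in> K" using qr(2) unfolding r poly_over_def by (metis coeff_pCons_0)
  moreover have "poly H \<alpha> = c" using qr(3) alpha_power_p unfolding r by (simp add: poly_kummer_poly)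
  ultimately show ?thesis by simp
qed

text \<open>The inverse of \<open>x = g(\<alpha>)\<close> is \<open>Y / N\<close> with \<open>N = \<Prod>\<^sub>j g(\<zeta>\<^sup>j \<alpha>) = x Y\<close>; the norm \<open>N\<close> lies in \<open>K\<close>
  because \<open>\<Prod>\<^sub>j g(\<zeta>\<^sup>j X)\<close> is invariant under \<open>X \<mapsto> \<zeta> X\<close>.\<close>

lemma K_alpha_inverse:
  assumes x: "x \<in> K_alpha" "x \<noteq> 0"
  shows "inverse x \<in> K_alpha"
proof -
  obtain g where g: "poly_over K g" "x = poly g \<alpha>" using x(1) by (rule K_alphaE)
  define f where "f j = g \<circ>\<^sub>p [:0, \<zeta> ^ j:]" for j
  have fK: "poly_over K (f j)" for j
    unfolding f_def by (intro poly_over_scale g(1) K.power_mem zeta_in_K)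
  have poly_f: "poly (f j) w = poly g (\<zeta> ^ j * w)" for j w
    unfolding f_def poly_pcompose_scale ..
  define H where "H = (\<Prod>j<p. f j)"
  have f0: "f 0 = g" unfolding f_def power_0 by (rule pcompose_idR)
  have "f 0 * (\<Prod>j<p. f (Suc j)) = (\<Prod>j<Suc p. f j)" by (rule prod.lessThan_Suc_shift[symmetric])
  also have "\<dots> = f 0 * H" unfolding H_def prod.lessThan_Suc f_def zeta_power_p by simp
  finally have "f 0 * (\<Prod>j<p. f (Suc j)) = f 0 * H" .
  moreover have "g \<noteq> 0" using g x(2) by auto
  ultimately have shift: "(\<Prod>j<p. f (Suc j)) = H" unfolding f0 by simp
  have "f j \<circ>\<^sub>p [:0, \<zeta>:] = f (Suc j)" for j
    unfolding f_def pcompose_scale_scale by (simp add: mult.commute)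
  hence "H \<circ>\<^sub>p [:0, \<zeta>:] = (\<Prod>j<p. f (Suc j))" unfolding H_def pcompose_hom.hom_prod by simp
  also note shift
  finally have N: "poly H \<alpha> \<in> K"
    by (rule value_at_alpha_in_K_if_scale_invariant[rotated]) (unfold H_def, intro K.poly_over_prod fK)
  define Y where "Y = poly (\<Prod>j<p - 1. f (Suc j)) \<alpha>"
  have "Y \<in> K_alpha" unfolding Y_def by (intro K_alphaI K.poly_over_prod fK)
  have "poly H \<alpha> = poly (\<Prod>j<Suc (p - 1). f j) \<alpha>" unfolding H_def using p_pos by simp
  also have "\<dots> = x * Y" unfolding prod.lessThan_Suc_shift Y_def by (simp add: poly_f g(2))
  finally have HxY: "poly H \<alpha> = x * Y" .
  have "poly (f j) \<alpha> \<noteq> 0" if j: "j < p" for j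
  proof
    assume "poly (f j) \<alpha> = 0"
    hence "poly (f j) (\<zeta> ^ (p - j) * \<alpha>) = 0"
      by (rule root_of_alpha_annihilator[OF fK _ zeta_power_alpha_power_p])
    moreover have "poly (f j) (\<zeta> ^ (p - j) * \<alpha>) = x"
      unfolding poly_f g(2) using j by (simp add: mult.assoc[symmetric] power_add[symmetric] zeta_power_p)
    ultimately show False using x(2) by simp
  qed
  hence "poly H \<alpha> \<noteq> 0" unfolding H_def poly_prod by simp
  hence "inverse x = Y * inverse (poly H \<alpha>)" unfolding HxY using x(2) by (simp add: field_simps)
  thus ?thesis
    using \<open>Y \<in> K_alpha\<close> K_subset_K_alpha subfield_inverse_mem[OF subfield_K N] K_alpha_mult by auto
qed

lemma K_alpha_subfield: "is_subfield K_alpha"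
  unfolding is_subfield_def
  using K_subset_K_alpha K.zero_mem K.one_mem K_alpha_add K_alpha_mult K_alpha_uminus K_alpha_inverse
  by auto

lemma gen_field_insert_alpha:
  assumes "K = gen_field S"
  shows "gen_field (insert \<alpha> S) = K_alpha"
proof
  show "gen_field (insert \<alpha> S) \<subseteq> K_alpha"
    using gen_field_least[OF K_alpha_subfield] alpha_in_K_alpha K_subset_K_alpha
      gen_field_superset[of S] assms by auto
  have F: "is_subfield (gen_field (insert \<alpha> S))" by (rule gen_field_is_subfield)
  have KF: "K \<subseteq> gen_field (insert \<alpha> S)" unfolding assms
    by (rule gen_field_least[OF F]) (use gen_field_superset in blast)
  have \<alpha>F: "\<alpha> \<in> gen_field (insert \<alpha> S)" using gen_field_superset by blast
  show "K_alpha \<subseteq> gen_field (insert \<alpha> S)"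
  proof
    fix x assume "x \<in> K_alpha"
    then obtain g where g: "poly_over K g" "x = poly g \<alpha>" by (rule K_alphaE)
    interpret F: subring_set "gen_field (insert \<alpha> S)" by (rule subfield_imp_subring_set[OF F])
    have "poly g \<alpha> = (\<Sum>i\<le>degree g. coeff g i * \<alpha> ^ i)" by (rule poly_altdef)
    also have "\<dots> \<in> gen_field (insert \<alpha> S)" using g(1) KF \<alpha>F unfolding poly_over_def
      by (intro F.sum_mem F.mult_mem F.power_mem) auto
    finally show "x \<in> gen_field (insert \<alpha> S)" using g by simp
  qed
qed

end

context kummer_extension
begin

lemma inj_on_alpha_powers: "inj_on (\<lambda>i. \<alpha> ^ i) {..<p}"
proof (rule linorder_inj_onI')
  fix i j assume ij: "i \<in> {..<p}" "j \<in> {..<p}" "i < j"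
  define g where "g = monom (1::complex) j - monom 1 i"
  have "poly_over K g" unfolding g_def by (intro K.poly_over_diff K.poly_over_monom K.one_mem)
  moreover have "g \<noteq> 0" using ij by (auto simp: g_def poly_eq_iff coeff_monom)
  moreover have "degree g \<le> j" unfolding g_def
    by (rule degree_diff_le) (auto intro: order.trans[OF degree_monom_le] less_imp_le ij)
  hence "degree g < p" using ij by simp
  ultimately have "poly g \<alpha> \<noteq> 0" using alpha_annihilator_degree by fastforce
  thus "\<alpha> ^ i \<noteq> \<alpha> ^ j" unfolding g_def by (simp add: poly_monom)
qed

lemma sum_alpha_powers: "(\<Sum>b\<in>(\<lambda>i. \<alpha> ^ i) ` {..<p}. f b) = (\<Sum>i<p. f (\<alpha> ^ i))"
  by (rule sum.reindex[OF inj_on_alpha_powers, unfolded o_def])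

lemma lin_indep_alpha_powers: "lin_indep_over K ((\<lambda>i. \<alpha> ^ i) ` {..<p})"
  unfolding lin_indep_over_def
proof (intro allI impI ballI)
  fix c b assume c: "(\<forall>b\<in>(\<lambda>i. \<alpha> ^ i) ` {..<p}. c b \<in> K) \<and> (\<Sum>b\<in>(\<lambda>i. \<alpha> ^ i) ` {..<p}. c b * b) = 0"
    and b: "b \<in> (\<lambda>i. \<alpha> ^ i) ` {..<p}"
  define g where "g = (\<Sum>i<p. monom (c (\<alpha> ^ i)) i)"
  have coeff_g: "coeff g j = (if j < p then c (\<alpha> ^ j) else 0)" for j
    unfolding g_def by (simp add: coeff_sum coeff_monom)
  have "poly_over K g" unfolding g_def using c by (intro K.poly_over_sum K.poly_over_monom) auto
  moreover have "poly g \<alpha> = 0" using c unfolding g_def sum_alpha_powers by (simp add: poly_sum poly_monom)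
  moreover have "degree g \<le> p - 1" by (rule degree_le) (auto simp: coeff_g)
  hence "degree g < p" using p_pos by linarith
  ultimately have "g = 0" using alpha_annihilator_degree by fastforce
  moreover obtain i where "i < p" "b = \<alpha> ^ i" using b by auto
  ultimately show "c b = 0" using coeff_g[of i] by simp
qed

lemma span_alpha_powers: "span_over K ((\<lambda>i. \<alpha> ^ i) ` {..<p}) = K_alpha"
proof
  show "span_over K ((\<lambda>i. \<alpha> ^ i) ` {..<p}) \<subseteq> K_alpha"
  proof
    fix x assume "x \<in> span_over K ((\<lambda>i. \<alpha> ^ i) ` {..<p})"
    then obtain c where c: "\<forall>b\<in>(\<lambda>i. \<alpha> ^ i) ` {..<p}. c b \<in> K"
        "x = (\<Sum>b\<in>(\<lambda>i. \<alpha> ^ i) ` {..<p}. c b * b)"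
      unfolding span_over_def by auto
    have "x = poly (\<Sum>i<p. monom (c (\<alpha> ^ i)) i) \<alpha>"
      unfolding c(2) sum_alpha_powers by (simp add: poly_sum poly_monom)
    moreover have "poly_over K (\<Sum>i<p. monom (c (\<alpha> ^ i)) i)"
      using c(1) by (intro K.poly_over_sum K.poly_over_monom) auto
    ultimately show "x \<in> K_alpha" using K_alphaI by simp
  qed
  show "K_alpha \<subseteq> span_over K ((\<lambda>i. \<alpha> ^ i) ` {..<p})"
  proof
    fix x assume "x \<in> K_alpha"
    then obtain g where g: "poly_over K g" "x = poly g \<alpha>" by (rule K_alphaE)
    obtain q r where qr: "poly_over K q" "poly_over K r" "g = kummer_poly * q + r"
        "r = 0 \<or> degree r < p"
      by (rule kummer_poly_divmod[OF g(1)])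
    define c where "c b = coeff r (inv_into {..<p} (\<lambda>i. \<alpha> ^ i) b)" for b
    have "x = poly r \<alpha>" using g(2) qr(3) alpha_power_p by (simp add: poly_kummer_poly)
    also have "\<dots> = (\<Sum>i<p. coeff r i * \<alpha> ^ i)" by (rule poly_eq_sum_below[OF qr(4)])
    also have "\<dots> = (\<Sum>b\<in>(\<lambda>i. \<alpha> ^ i) ` {..<p}. c b * b)"
      unfolding sum_alpha_powers c_def using inj_on_alpha_powers
      by (intro sum.cong refl) (simp add: inv_into_f_f)
    finally have "x = (\<Sum>b\<in>(\<lambda>i. \<alpha> ^ i) ` {..<p}. c b * b)" .
    moreover have "\<forall>b\<in>(\<lambda>i. \<alpha> ^ i) ` {..<p}. c b \<in> K"
      using qr(2) unfolding c_def poly_over_def by auto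
    ultimately show "x \<in> span_over K ((\<lambda>i. \<alpha> ^ i) ` {..<p})" unfolding span_over_def by auto
  qed
qed

lemma basis_alpha_powers: "basis_over K K_alpha ((\<lambda>i. \<alpha> ^ i) ` {..<p})"
  unfolding basis_over_def
proof (intro conjI lin_indep_alpha_powers span_alpha_powers)
  show "(\<lambda>i. \<alpha> ^ i) ` {..<p} \<subseteq> K_alpha"
    using K_alphaI[OF K.poly_over_monom[OF K.one_mem]] by (auto simp: poly_monom)
qed simp

theorem ext_degree_K_alpha: "ext_degree K K_alpha p"
  unfolding ext_degree_def
  by (intro conjI exI[of _ "(\<lambda>i. \<alpha> ^ i) ` {..<p}"] subfield_K K_alpha_subfield K_subset_K_alpha
      basis_alpha_powers) (simp add: card_image[OF inj_on_alpha_powers])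

definition K_alpha_poly :: "complex \<Rightarrow> complex poly" where
  "K_alpha_poly x = (SOME g. poly_over K g \<and> x = poly g \<alpha>)"

lemma K_alpha_poly:
  assumes "x \<in> K_alpha" shows "poly_over K (K_alpha_poly x)" "x = poly (K_alpha_poly x) \<alpha>"
proof -
  have "\<exists>g. poly_over K g \<and> x = poly g \<alpha>" using assms unfolding K_alpha_def by blast
  hence "poly_over K (K_alpha_poly x) \<and> x = poly (K_alpha_poly x) \<alpha>"
    unfolding K_alpha_poly_def by (rule someI_ex)
  thus "poly_over K (K_alpha_poly x)" "x = poly (K_alpha_poly x) \<alpha>" by blast+
qed

text \<open>The automorphism \<open>\<alpha> \<mapsto> \<zeta>\<^sup>j \<alpha>\<close>, extended by the identity outside \<open>K(\<alpha>)\<close> as in \<open>auts\<close>; it is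
  well defined because \<open>g(\<alpha>) = 0\<close> forces \<open>g(\<zeta>\<^sup>j \<alpha>) = 0\<close>.\<close>

definition kummer_aut :: "nat \<Rightarrow> complex \<Rightarrow> complex" where
  "kummer_aut j x = (if x \<in> K_alpha then poly (K_alpha_poly x) (\<zeta> ^ j * \<alpha>) else x)"

lemma kummer_aut_poly: assumes "poly_over K g" shows "kummer_aut j (poly g \<alpha>) = poly g (\<zeta> ^ j * \<alpha>)"
proof -
  have x: "poly g \<alpha> \<in> K_alpha" by (rule K_alphaI[OF assms])
  have "poly (K_alpha_poly (poly g \<alpha>) - g) \<alpha> = 0"
    unfolding poly_diff K_alpha_poly(2)[OF x, symmetric] by simp
  hence "poly (K_alpha_poly (poly g \<alpha>) - g) (\<zeta> ^ j * \<alpha>) = 0"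
    by (rule root_of_alpha_annihilator[OF K.poly_over_diff[OF K_alpha_poly(1)[OF x] assms] _
          zeta_power_alpha_power_p])
  thus ?thesis unfolding kummer_aut_def using x by simp
qed

lemma kummer_aut_alpha: "kummer_aut j \<alpha> = \<zeta> ^ j * \<alpha>"
  using kummer_aut_poly[OF K.poly_over_pCons[OF K.zero_mem K.poly_over_1], of j] by simp

lemma kummer_aut_outside: "x \<notin> K_alpha \<Longrightarrow> kummer_aut j x = x"
  unfolding kummer_aut_def by simp

lemma kummer_aut_K_alpha: "x \<in> K_alpha \<Longrightarrow> kummer_aut j x = poly (K_alpha_poly x \<circ>\<^sub>p [:0, \<zeta> ^ j:]) \<alpha>"
  unfolding kummer_aut_def poly_pcompose_scale by simp

lemma kummer_aut_in_K_alpha: "x \<in> K_alpha \<Longrightarrow> kummer_aut j x \<in> K_alpha"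
  unfolding kummer_aut_K_alpha
  by (intro K_alphaI poly_over_scale K_alpha_poly(1) K.power_mem zeta_in_K)

lemma kummer_aut_comp: "kummer_aut i (kummer_aut j x) = kummer_aut (i + j) x"
proof (cases "x \<in> K_alpha")
  case True
  let ?g = "K_alpha_poly x"
  have "kummer_aut i (kummer_aut j x) = poly (?g \<circ>\<^sub>p [:0, \<zeta> ^ j:]) (\<zeta> ^ i * \<alpha>)"
    unfolding kummer_aut_K_alpha[OF True]
    by (intro kummer_aut_poly poly_over_scale K_alpha_poly(1)[OF True] K.power_mem zeta_in_K)
  also have "\<dots> = kummer_aut (i + j) x"
    unfolding kummer_aut_def poly_pcompose_scale using True by (simp add: power_add mult_ac)
  finally show ?thesis .
next
  case False thus ?thesis by (simp add: kummer_aut_outside)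
qed

lemma kummer_aut_multiple_p: assumes "p dvd n" shows "kummer_aut n x = x"
proof (cases "x \<in> K_alpha")
  case True
  thus ?thesis unfolding kummer_aut_def
    using K_alpha_poly(2)[OF True, symmetric] zeta_power_eq_1_iff[of n] assms by simp
qed (simp add: kummer_aut_outside)

lemma kummer_aut_hom:
  assumes "x \<in> K_alpha" "y \<in> K_alpha"
  shows "kummer_aut j (x + y) = kummer_aut j x + kummer_aut j y"
    and "kummer_aut j (x * y) = kummer_aut j x * kummer_aut j y"
proof -
  obtain g where g: "poly_over K g" "x = poly g \<alpha>" using assms(1) by (rule K_alphaE)
  obtain h where h: "poly_over K h" "y = poly h \<alpha>" using assms(2) by (rule K_alphaE)
  note gh = g h
  show "kummer_aut j (x + y) = kummer_aut j x + kummer_aut j y"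
    using kummer_aut_poly[OF K.poly_over_add[OF gh(1,3)]] kummer_aut_poly[OF gh(1)]
      kummer_aut_poly[OF gh(3)] gh by simp
  show "kummer_aut j (x * y) = kummer_aut j x * kummer_aut j y"
    using kummer_aut_poly[OF K.poly_over_mult[OF gh(1,3)]] kummer_aut_poly[OF gh(1)]
      kummer_aut_poly[OF gh(3)] gh by simp
qed

lemma kummer_aut_in_auts: "kummer_aut j \<in> auts K K_alpha"
proof -
  have "p - j mod p + j = p - j mod p + (p * (j div p) + j mod p)" by simp
  also have "\<dots> = p * (j div p) + p" using mod_less_divisor[OF p_pos, of j] by linarith
  finally have "p dvd (p - j mod p) + j" by simp
  hence "bij_betw (kummer_aut j) K_alpha K_alpha"
    by (intro bij_betw_byWitness[where f' = "kummer_aut (p - j mod p)"])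
      (simp_all add: kummer_aut_comp kummer_aut_multiple_p add.commute image_subset_iff
        kummer_aut_in_K_alpha)
  moreover have "kummer_aut j c = c" if "c \<in> K" for c
    using kummer_aut_poly[OF K.poly_over_const[OF that], of j] by simp
  ultimately show ?thesis
    unfolding auts_def using kummer_aut_hom kummer_aut_outside by blast
qed

lemma aut_poly_alpha:
  assumes \<tau>: "\<tau> \<in> auts K K_alpha" and g: "poly_over K g"
  shows "\<tau> (poly g \<alpha>) = poly g (\<tau> \<alpha>)"
  using g
proof (induction g)
  case 0
  have "\<tau> 0 = 0" using \<tau> K.zero_mem unfolding auts_def by auto
  thus ?case by simp
next
  case (pCons c g)
  have cK: "c \<in> K" and gK: "poly_over K g"
    using pCons.prems unfolding poly_over_def by (metis coeff_pCons_0, metis coeff_pCons_Suc)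
  have hom: "\<forall>x\<in>K_alpha. \<forall>y\<in>K_alpha. \<tau> (x + y) = \<tau> x + \<tau> y \<and> \<tau> (x * y) = \<tau> x * \<tau> y"
    and fix_K: "\<forall>x\<in>K. \<tau> x = x" using \<tau> unfolding auts_def by auto
  have "c \<in> K_alpha" "\<alpha> * poly g \<alpha> \<in> K_alpha"
    using cK K_subset_K_alpha K_alpha_mult[OF alpha_in_K_alpha K_alphaI[OF gK]] by auto
  hence "\<tau> (c + \<alpha> * poly g \<alpha>) = \<tau> c + \<tau> \<alpha> * \<tau> (poly g \<alpha>)"
    using hom alpha_in_K_alpha K_alphaI[OF gK] by simp
  also have "\<dots> = c + \<tau> \<alpha> * poly g (\<tau> \<alpha>)" using fix_K cK pCons.IH[OF gK] by simp
  finally show ?case by simp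
qed

lemma aut_eq_kummer_aut:
  assumes \<tau>: "\<tau> \<in> auts K K_alpha"
  shows "\<exists>j<p. \<tau> = kummer_aut j"
proof -
  have "\<tau> a = \<tau> \<alpha> ^ p"
    using aut_poly_alpha[OF \<tau> K.poly_over_monom[OF K.one_mem, of p]] alpha_power_p
    by (simp add: poly_monom)
  moreover have "\<tau> a = a" using \<tau> a_in_K unfolding auts_def by auto
  ultimately obtain j where j: "j < p" "\<tau> \<alpha> = \<zeta> ^ j * \<alpha>" using kummer_root_eq by metis
  have "\<tau> = kummer_aut j"
  proof
    fix x
    show "\<tau> x = kummer_aut j x"
    proof (cases "x \<in> K_alpha")
      case True
      then obtain g where g: "poly_over K g" "x = poly g \<alpha>" by (rule K_alphaE)
      show ?thesis unfolding g(2) aut_poly_alpha[OF \<tau> g(1)] kummer_aut_poly[OF g(1)] j(2) ..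
    next
      case False thus ?thesis using \<tau> kummer_aut_outside unfolding auts_def by auto
    qed
  qed
  with j(1) show ?thesis by (intro exI[of _ j]) simp
qed

lemma auts_K_alpha: "auts K K_alpha = kummer_aut ` {..<p}"
proof
  show "auts K K_alpha \<subseteq> kummer_aut ` {..<p}"
  proof
    fix \<tau> assume "\<tau> \<in> auts K K_alpha"
    then obtain j where "j < p" "\<tau> = kummer_aut j" using aut_eq_kummer_aut by blast
    thus "\<tau> \<in> kummer_aut ` {..<p}" by simp
  qed
  show "kummer_aut ` {..<p} \<subseteq> auts K K_alpha" using kummer_aut_in_auts by auto
qed

lemma inj_on_kummer_aut: "inj_on kummer_aut {..<p}"
proof
  fix i j assume ij: "i \<in> {..<p}" "j \<in> {..<p}" "kummer_aut i = kummer_aut j"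
  have "\<zeta> ^ i * \<alpha> = \<zeta> ^ j * \<alpha>"
    using arg_cong[OF ij(3), of "\<lambda>\<sigma>. \<sigma> \<alpha>"] unfolding kummer_aut_alpha .
  thus "i = j" using alpha_nonzero zeta_power_inj[of i j] ij(1,2) by simp
qed

theorem cyclic_ext_K_alpha: "cyclic_ext K K_alpha"
proof -
  have "card (auts K K_alpha) = p" unfolding auts_K_alpha by (simp add: card_image[OF inj_on_kummer_aut])
  hence galois: "galois_ext K K_alpha"
    unfolding galois_ext_def auts_K_alpha using ext_degree_K_alpha by auto
  have generated: "\<forall>\<tau>\<in>auts K K_alpha. \<exists>m::nat. \<tau> = kummer_aut 1 ^^ m"
  proof
    fix \<tau> assume "\<tau> \<in> auts K K_alpha"
    then obtain j where j: "\<tau> = kummer_aut j" using aut_eq_kummer_aut by blast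
    have "kummer_aut 1 ^^ m = kummer_aut m" for m
      by (induction m) (auto simp: kummer_aut_multiple_p kummer_aut_comp fun_eq_iff)
    thus "\<exists>m::nat. \<tau> = kummer_aut 1 ^^ m" unfolding j by metis
  qed
  have "\<exists>\<sigma>\<in>auts K K_alpha. \<forall>\<tau>\<in>auts K K_alpha. \<exists>m::nat. \<tau> = \<sigma> ^^ m"
  proof (rule bexI)
    show "\<forall>\<tau>\<in>auts K K_alpha. \<exists>m::nat. \<tau> = kummer_aut 1 ^^ m" by (rule generated)
  qed (rule kummer_aut_in_auts)
  with galois show ?thesis unfolding cyclic_ext_def ..
qed

end

theorem mainTheorem11:
  fixes p k :: nat and \<alpha> :: complex
  assumes "prime p" and "p > 3"
    and "1 \<le> k" and "k \<le> (p - 1) div 2"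
    and "\<alpha> ^ p = cis (2 * pi / real p) ^ k + inverse (cis (2 * pi / real p) ^ k)"
  shows "cyclic_ext (gen_field {cis (2 * pi / real p)}) (gen_field {cis (2 * pi / real p), \<alpha>})
       \<and> ext_degree (gen_field {cis (2 * pi / real p)}) (gen_field {cis (2 * pi / real p), \<alpha>}) p"
proof -
  define \<zeta> where "\<zeta> = cis (2 * pi / real p)"
  interpret prime_root_of_unity p \<zeta> by unfold_locales (use assms(1) \<zeta>_def in auto)
  have "k < p" using assms(2,4) by linarith
  let ?a = "\<zeta> ^ k + inverse (\<zeta> ^ k)"
  have K: "is_subfield (gen_field {\<zeta>})" "\<zeta> \<in> gen_field {\<zeta>}"
    using gen_field_is_subfield gen_field_superset by auto
  interpret kummer_extension p \<zeta> "gen_field {\<zeta>}" \<alpha> ?a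
  proof
    show "?a \<in> gen_field {\<zeta>}"
      using subfield_imp_subring_set[OF K(1)] subfield_inverse_mem[OF K(1)] K(2)
      by (meson subring_set.add_mem subring_set.power_mem)
    show "\<beta> ^ p \<noteq> ?a" if "\<beta> \<in> gen_field {\<zeta>}" for \<beta>
      by (rule zeta_power_plus_inverse_not_p_th_power[OF assms(2,3) \<open>k < p\<close> that])
  qed (use K assms(5) \<zeta>_def in simp_all)
  have L: "gen_field {\<zeta>, \<alpha>} = K_alpha"
    using gen_field_insert_alpha[of "{\<zeta>}"] by (simp add: insert_commute)
  show ?thesis unfolding \<zeta>_def[symmetric] L by (intro conjI cyclic_ext_K_alpha ext_degree_K_alpha)
qed

end
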